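(* For each $N\ge1$ let $\eta^N(t)$ be an irreducible continuous-time Markov chain on a finite set $\Omega_N$ with jump rates $R_N(\eta,\xi)$, generator $L_N$ and unique stationary distribution $\nu_N$; let $A_N\subset\Omega_N$ with $\lim_N\nu_N(A_N)=0$ and $H_N=\inf\{t>0:\eta^N(t)\in A_N\}$. Let $S_N$ be an increasing sequence and $\mu_N$ probability measures on $\Omega_N$. Assume $$\lim_{N\to\infty}\Big\{\mu_N(A_N)+S_N\,\nu_N(A_N^c)\,r_N(A_N^c,A_N)\Big\}=0,\qquad \lim_{N\to\infty}\|R'_N(\cdot,A_N)\|_2\,\Big\|\frac{d\mu_N}{d\nu_N}\Big\|_2\,T^{\rm rel}_N\big(1-e^{-S_N/T^{\rm rel}_N}\big)=0,$$ where $R'_N(\eta,A_N)=\mathbf 1\{\eta\notin A_N\}R_N(\eta,A_N)$. Then $\lim_{N\to\infty}\mathbb P_{\mu_N}[H_N<S_N]=0$.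
   Context: $R_N(\eta,A_N)=\sum_{\zeta\in A_N}R_N(\eta,\zeta)$, $r_N(A_N^c,A_N)=\frac1{\nu_N(A_N^c)}\sum_{\xi\in A_N^c}\nu_N(\xi)R_N(\xi,A_N)$. $\|\cdot\|_2$ is the norm of $L^2(\nu_N)$. $T^{\rm rel}_N$ is the relaxation time, the inverse of the spectral gap of the symmetric part $(L_N+L_N^* )/2$ of the generator in $L^2(\nu_N)$, $L_N^*$ being the adjoint of $L_N$ in $L^2(\nu_N)$. $\mathbb P_{\mu_N}$ is the law of the chain started from $\mu_N$. *)

theory Defs
  imports Complex_Main
begin

definition irreducible :: "'a set \<Rightarrow> ('a \<Rightarrow> 'a \<Rightarrow> real) \<Rightarrow> bool" where
  "irreducible \<Omega> R \<longleftrightarrow>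
     (\<forall>x\<in>\<Omega>. \<forall>y\<in>\<Omega>. (x, y) \<in> {(u, v). u \<in> \<Omega> \<and> v \<in> \<Omega> \<and> u \<noteq> v \<and> R u v > 0}\<^sup>*)"

definition gen :: "'a set \<Rightarrow> ('a \<Rightarrow> 'a \<Rightarrow> real) \<Rightarrow> 'a \<Rightarrow> 'a \<Rightarrow> real" where
  "gen \<Omega> R x y = (if x = y then - (\<Sum>z\<in>\<Omega> - {x}. R x z) else R x y)"

definition is_prob :: "'a set \<Rightarrow> ('a \<Rightarrow> real) \<Rightarrow> bool" where
  "is_prob \<Omega> p \<longleftrightarrow> (\<forall>x\<in>\<Omega>. p x \<ge> 0) \<and> (\<Sum>x\<in>\<Omega>. p x) = 1"

definition stationary :: "'a set \<Rightarrow> ('a \<Rightarrow> 'a \<Rightarrow> real) \<Rightarrow> ('a \<Rightarrow> real) \<Rightarrow> bool" where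
  "stationary \<Omega> R \<nu> \<longleftrightarrow> is_prob \<Omega> \<nu> \<and> (\<forall>y\<in>\<Omega>. (\<Sum>x\<in>\<Omega>. \<nu> x * gen \<Omega> R x y) = 0)"

definition adj_gen :: "'a set \<Rightarrow> ('a \<Rightarrow> 'a \<Rightarrow> real) \<Rightarrow> ('a \<Rightarrow> real) \<Rightarrow> 'a \<Rightarrow> 'a \<Rightarrow> real" where
  "adj_gen \<Omega> R \<nu> x y = \<nu> y * gen \<Omega> R y x / \<nu> x"

definition sym_gen :: "'a set \<Rightarrow> ('a \<Rightarrow> 'a \<Rightarrow> real) \<Rightarrow> ('a \<Rightarrow> real) \<Rightarrow> 'a \<Rightarrow> 'a \<Rightarrow> real" where
  "sym_gen \<Omega> R \<nu> x y = (gen \<Omega> R x y + adj_gen \<Omega> R \<nu> x y) / 2"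

definition spectral_gap :: "'a set \<Rightarrow> ('a \<Rightarrow> 'a \<Rightarrow> real) \<Rightarrow> ('a \<Rightarrow> real) \<Rightarrow> real" where
  "spectral_gap \<Omega> R \<nu> = Inf {l. l > 0 \<and> (\<exists>f. (\<exists>x\<in>\<Omega>. f x \<noteq> 0) \<and>
        (\<forall>x\<in>\<Omega>. - (\<Sum>y\<in>\<Omega>. sym_gen \<Omega> R \<nu> x y * f y) = l * f x))}"

definition T_rel :: "'a set \<Rightarrow> ('a \<Rightarrow> 'a \<Rightarrow> real) \<Rightarrow> ('a \<Rightarrow> real) \<Rightarrow> real" where
  "T_rel \<Omega> R \<nu> = 1 / spectral_gap \<Omega> R \<nu>"

definition L2norm :: "'a set \<Rightarrow> ('a \<Rightarrow> real) \<Rightarrow> ('a \<Rightarrow> real) \<Rightarrow> real" where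
  "L2norm \<Omega> \<nu> f = sqrt (\<Sum>x\<in>\<Omega>. \<nu> x * (f x)\<^sup>2)"

definition rate_to :: "('a \<Rightarrow> 'a \<Rightarrow> real) \<Rightarrow> 'a \<Rightarrow> 'a set \<Rightarrow> real" where
  "rate_to R x A = (\<Sum>z\<in>A. R x z)"

definition meas :: "('a \<Rightarrow> real) \<Rightarrow> 'a set \<Rightarrow> real" where
  "meas p A = (\<Sum>x\<in>A. p x)"

definition cap_rate :: "'a set \<Rightarrow> ('a \<Rightarrow> 'a \<Rightarrow> real) \<Rightarrow> ('a \<Rightarrow> real) \<Rightarrow> 'a set \<Rightarrow> real" where
  "cap_rate \<Omega> R \<nu> A = (\<Sum>x\<in>\<Omega> - A. \<nu> x * rate_to R x A) / meas \<nu> (\<Omega> - A)"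

fun mpow :: "'a set \<Rightarrow> ('a \<Rightarrow> 'a \<Rightarrow> real) \<Rightarrow> nat \<Rightarrow> 'a \<Rightarrow> 'a \<Rightarrow> real" where
  "mpow B M 0 x y = (if x = y then 1 else 0)"
| "mpow B M (Suc k) x y = (\<Sum>z\<in>B. M x z * mpow B M k z y)"

definition mexp :: "'a set \<Rightarrow> real \<Rightarrow> ('a \<Rightarrow> 'a \<Rightarrow> real) \<Rightarrow> 'a \<Rightarrow> 'a \<Rightarrow> real" where
  "mexp B t M x y = (\<Sum>k. t ^ k / fact k * mpow B M k x y)"

text \<open>Law of the hitting time H = inf{t > 0 : eta(t) \<in> A} for the chain started
  from mu: for t > 0, P_mu[H \<ge> t] = sum over x in B = Omega - A of
  mu(x) (exp(t L_B) 1)(x), L_B the generator killed upon entering A.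
  hit_before \<Omega> R \<mu> A t = P_mu[H < t].\<close>
definition hit_before :: "'a set \<Rightarrow> ('a \<Rightarrow> 'a \<Rightarrow> real) \<Rightarrow> ('a \<Rightarrow> real) \<Rightarrow> 'a set \<Rightarrow> real \<Rightarrow> real" where
  "hit_before \<Omega> R \<mu> A t =
     (if t \<le> 0 then 0
      else 1 - (\<Sum>x\<in>\<Omega> - A. \<mu> x * (\<Sum>y\<in>\<Omega> - A. mexp (\<Omega> - A) t (gen \<Omega> R) x y)))"

end

theory Submission
  imports
    Defs
    "HOL-Analysis.Function_Topology"
    "HOL-Analysis.Elementary_Normed_Spaces"
    "HOL-Analysis.L2_Norm"
begin

text \<open>Write \<open>f = 1{\<cdot> \<notin> A} R(\<cdot>, A)\<close> for the escape rate, \<open>P\<^sub>t\<close> for the semigroup and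
  \<open>T = T_rel\<close>. The probability of hitting \<open>A\<close> before time \<open>S\<close> is \<open>\<mu>(A)\<close> plus the integral over
  \<open>[0, S]\<close> of \<open>\<mu>\<close> applied to the semigroup killed on \<open>A\<close> acting on \<open>f\<close>. Killing only
  decreases the semigroup, so this rate is at most
  \<open>E\<^sub>\<mu> P\<^sub>t f = E\<^sub>\<nu> f + \<langle>d\<mu>/d\<nu>, P\<^sub>t (f - E\<^sub>\<nu> f)\<rangle>\<^sub>\<nu>\<close>, and by Cauchy-Schwarz and the
  decay \<open>exp (-t/T)\<close> of mean-zero functions in \<open>L\<^sup>2(\<nu>)\<close> the second term is at most
  \<open>\<parallel>d\<mu>/d\<nu>\<parallel> \<parallel>f\<parallel> exp (-t/T)\<close>. Integrating gives
  \<open>P[H < S] \<le> \<mu>(A) + S \<nu>(A\<^sup>c) r(A\<^sup>c, A) + \<parallel>f\<parallel> \<parallel>d\<mu>/d\<nu>\<parallel> T (1 - exp (-S/T))\<close>, and both parts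
  vanish by hypothesis.

  The decay rests on the Poincare inequality with the spectral gap as constant. It is obtained
  by minimising the Dirichlet form over the compact unit sphere of mean-zero functions: the
  minimiser is an eigenfunction of the symmetrised generator whose eigenvalue is therefore
  the smallest positive one, and it is positive by irreducibility.\<close>

section \<open>Matrix exponential over a finite index set\<close>

definition entrywise_norm :: "'a set \<Rightarrow> ('a \<Rightarrow> 'a \<Rightarrow> real) \<Rightarrow> real" where
  "entrywise_norm B M = (\<Sum>u\<in>B. \<Sum>v\<in>B. \<bar>M u v\<bar>)"

lemma entrywise_norm_nonneg: "entrywise_norm B M \<ge> 0"
  unfolding entrywise_norm_def by (intro sum_nonneg) auto

lemma abs_mpow_le:
  assumes "finite B" "x \<in> B"
  shows "\<bar>mpow B M k x y\<bar> \<le> entrywise_norm B M ^ k"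
  using assms(2)
proof (induction k arbitrary: x)
  case 0
  then show ?case by simp
next
  case (Suc k)
  have row: "(\<Sum>z\<in>B. \<bar>M x z\<bar>) \<le> entrywise_norm B M"
    unfolding entrywise_norm_def
    using member_le_sum[of x B "\<lambda>u. \<Sum>v\<in>B. \<bar>M u v\<bar>"] assms(1) Suc.prems
    by (auto intro: sum_nonneg)
  have "\<bar>mpow B M (Suc k) x y\<bar> \<le> (\<Sum>z\<in>B. \<bar>M x z\<bar> * \<bar>mpow B M k z y\<bar>)"
    unfolding mpow.simps by (rule order_trans[OF sum_abs]) (simp add: abs_mult)
  also have "\<dots> \<le> (\<Sum>z\<in>B. \<bar>M x z\<bar> * entrywise_norm B M ^ k)"
    by (intro sum_mono mult_left_mono Suc.IH) auto
  also have "\<dots> \<le> entrywise_norm B M * entrywise_norm B M ^ k"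
    unfolding sum_distrib_right[symmetric]
    by (intro mult_right_mono row) (simp add: entrywise_norm_nonneg)
  finally show ?case by simp
qed

lemma mexp_series_norm_le:
  assumes "finite B" "x \<in> B"
  shows "norm (t ^ k / fact k * mpow B M k x y) \<le> (\<bar>t\<bar> * entrywise_norm B M) ^ k / fact k"
proof -
  have "norm (t ^ k / fact k * mpow B M k x y) = \<bar>t\<bar> ^ k / fact k * \<bar>mpow B M k x y\<bar>"
    by (simp add: abs_mult power_abs)
  also have "\<dots> \<le> \<bar>t\<bar> ^ k / fact k * entrywise_norm B M ^ k"
    by (intro mult_left_mono abs_mpow_le assms) auto
  finally show ?thesis by (simp add: power_mult_distrib)
qed

lemma summable_mexp_series:
  assumes "finite B" "x \<in> B"
  shows "summable (\<lambda>k. t ^ k / fact k * mpow B M k x y)"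
    and "summable (\<lambda>k. norm (t ^ k / fact k * mpow B M k x y))"
proof -
  have exp_series: "summable (\<lambda>k. (\<bar>t\<bar> * entrywise_norm B M) ^ k / fact k)"
    using summable_exp[of "\<bar>t\<bar> * entrywise_norm B M"] by (simp add: divide_inverse mult.commute)
  show "summable (\<lambda>k. norm (t ^ k / fact k * mpow B M k x y))"
    by (rule summable_comparison_test[OF _ exp_series]) (use mexp_series_norm_le[OF assms] in auto)
  then show "summable (\<lambda>k. t ^ k / fact k * mpow B M k x y)"
    by (rule summable_norm_cancel)
qed

lemma mexp_0: "mexp B 0 M x y = (if x = y then 1 else 0)"
proof -
  have "mexp B 0 M x y = (\<Sum>k\<in>{0}. (0::real) ^ k / fact k * mpow B M k x y)"
    unfolding mexp_def by (rule suminf_finite) auto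
  then show ?thesis by simp
qed

lemma mpow_Suc_right:
  assumes "finite B" "x \<in> B" "y \<in> B"
  shows "mpow B M (Suc k) x y = (\<Sum>z\<in>B. mpow B M k x z * M z y)"
  using assms(2)
proof (induction k arbitrary: x)
  case 0
  have "(\<Sum>z\<in>B. (if x = z then 1 else 0) * M z y) = (\<Sum>z\<in>B. if x = z then M z y else 0)"
    by (rule sum.cong) auto
  moreover have "(\<Sum>z\<in>B. M x z * (if z = y then 1 else 0)) = (\<Sum>z\<in>B. if y = z then M x z else 0)"
    by (rule sum.cong) auto
  ultimately show ?case using 0 assms(1,3) by simp
next
  case (Suc k)
  have "mpow B M (Suc (Suc k)) x y = (\<Sum>z\<in>B. M x z * (\<Sum>w\<in>B. mpow B M k z w * M w y))"
    by (subst mpow.simps(2), rule sum.cong[OF refl], subst Suc.IH) auto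
  also have "\<dots> = (\<Sum>z\<in>B. \<Sum>w\<in>B. M x z * mpow B M k z w * M w y)"
    by (simp add: sum_distrib_left mult.assoc)
  also have "\<dots> = (\<Sum>w\<in>B. \<Sum>z\<in>B. M x z * mpow B M k z w * M w y)"
    by (rule sum.swap)
  also have "\<dots> = (\<Sum>w\<in>B. (\<Sum>z\<in>B. M x z * mpow B M k z w) * M w y)"
    by (simp add: sum_distrib_right)
  finally show ?case by simp
qed

lemma has_real_derivative_mexp:
  assumes "finite B" "x \<in> B"
  shows "((\<lambda>t. mexp B t M x y) has_real_derivative (\<Sum>n. t ^ n / fact n * mpow B M (Suc n) x y)) (at t)"
proof -
  define c where "c n = mpow B M n x y / fact n" for n
  have series: "mexp B s M x y = (\<Sum>n. c n * s ^ n)" for s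
    unfolding mexp_def c_def by (simp add: field_simps)
  have "((\<lambda>s. \<Sum>n. c n * s ^ n) has_field_derivative (\<Sum>n. diffs c n * t ^ n)) (at t)"
    by (rule termdiffs_strong_converges_everywhere)
       (use summable_mexp_series(1)[OF assms] in \<open>simp add: c_def field_simps\<close>)
  moreover have "diffs c n * t ^ n = t ^ n / fact n * mpow B M (Suc n) x y" for n
    unfolding diffs_def c_def by (simp del: mpow.simps of_nat_Suc add: fact_Suc)
  ultimately show ?thesis unfolding series by simp
qed

lemma has_real_derivative_mexp_left:
  assumes "finite B" "x \<in> B"
  shows "((\<lambda>t. mexp B t M x y) has_real_derivative (\<Sum>z\<in>B. M x z * mexp B t M z y)) (at t)"
proof -
  have "(\<lambda>n. t ^ n / fact n * mpow B M (Suc n) x y)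
      = (\<lambda>n. \<Sum>z\<in>B. M x z * (t ^ n / fact n * mpow B M n z y))"
    by (simp add: sum_distrib_left mult_ac)
  then have "(\<Sum>n. t ^ n / fact n * mpow B M (Suc n) x y)
      = (\<Sum>n. \<Sum>z\<in>B. M x z * (t ^ n / fact n * mpow B M n z y))"
    by simp
  also have "\<dots> = (\<Sum>z\<in>B. \<Sum>n. M x z * (t ^ n / fact n * mpow B M n z y))"
    by (intro suminf_sum summable_mult summable_mexp_series(1) assms(1))
  also have "\<dots> = (\<Sum>z\<in>B. M x z * mexp B t M z y)"
    unfolding mexp_def by (intro sum.cong refl suminf_mult summable_mexp_series(1) assms(1))
  finally have eq: "(\<Sum>n. t ^ n / fact n * mpow B M (Suc n) x y) = (\<Sum>z\<in>B. M x z * mexp B t M z y)" .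
  show ?thesis unfolding eq[symmetric] by (rule has_real_derivative_mexp[OF assms])
qed

lemma has_real_derivative_mexp_right:
  assumes "finite B" "x \<in> B" "y \<in> B"
  shows "((\<lambda>t. mexp B t M x y) has_real_derivative (\<Sum>z\<in>B. mexp B t M x z * M z y)) (at t)"
proof -
  have "(\<lambda>n. t ^ n / fact n * mpow B M (Suc n) x y)
      = (\<lambda>n. \<Sum>z\<in>B. t ^ n / fact n * mpow B M n x z * M z y)"
    by (simp add: mpow_Suc_right[OF assms] sum_distrib_left mult_ac del: mpow.simps)
  then have "(\<Sum>n. t ^ n / fact n * mpow B M (Suc n) x y)
      = (\<Sum>n. \<Sum>z\<in>B. t ^ n / fact n * mpow B M n x z * M z y)"
    by simp
  also have "\<dots> = (\<Sum>z\<in>B. \<Sum>n. t ^ n / fact n * mpow B M n x z * M z y)"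
    by (intro suminf_sum summable_mult2 summable_mexp_series(1) assms(1,2))
  also have "\<dots> = (\<Sum>z\<in>B. mexp B t M x z * M z y)"
    unfolding mexp_def by (intro sum.cong refl suminf_mult2[symmetric] summable_mexp_series(1) assms(1,2))
  finally have eq: "(\<Sum>n. t ^ n / fact n * mpow B M (Suc n) x y) = (\<Sum>z\<in>B. mexp B t M x z * M z y)" .
  show ?thesis unfolding eq[symmetric] by (rule has_real_derivative_mexp[OF assms(1,2)])
qed

lemma binomial_sum_Suc:
  fixes s :: "nat \<Rightarrow> real"
  shows "(\<Sum>i\<le>k. of_nat (k choose i) * q ^ i * s (Suc (k - i)))
           + q * (\<Sum>i\<le>k. of_nat (k choose i) * q ^ i * s (k - i))
         = (\<Sum>i\<le>Suc k. of_nat (Suc k choose i) * q ^ i * s (Suc k - i))"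
proof -
  define f where "f j = of_nat (k choose j) * q ^ j * s (Suc k - j)" for j
  have "(\<Sum>i\<le>k. of_nat (k choose i) * q ^ i * s (Suc (k - i))) = (\<Sum>j\<le>k. f j)"
    by (rule sum.cong) (auto simp: f_def Suc_diff_le)
  also have "\<dots> = (\<Sum>j\<le>Suc k. f j)"
    by (simp add: f_def)
  also have "\<dots> = s (Suc k) + (\<Sum>i\<le>k. of_nat (k choose Suc i) * q ^ Suc i * s (k - i))"
    by (subst sum.atMost_Suc_shift) (simp add: f_def)
  finally have shifted: "(\<Sum>i\<le>k. of_nat (k choose i) * q ^ i * s (Suc (k - i)))
      = s (Suc k) + (\<Sum>i\<le>k. of_nat (k choose Suc i) * q ^ Suc i * s (k - i))" .
  have "(\<Sum>i\<le>Suc k. of_nat (Suc k choose i) * q ^ i * s (Suc k - i))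
      = s (Suc k) + (\<Sum>i\<le>k. of_nat (k choose i) * q ^ Suc i * s (k - i))
                  + (\<Sum>i\<le>k. of_nat (k choose Suc i) * q ^ Suc i * s (k - i))"
    by (subst sum.atMost_Suc_shift) (simp add: sum.distrib[symmetric] distrib_right)
  moreover have "q * (\<Sum>i\<le>k. of_nat (k choose i) * q ^ i * s (k - i))
      = (\<Sum>i\<le>k. of_nat (k choose i) * q ^ Suc i * s (k - i))"
    by (simp add: sum_distrib_left mult_ac)
  ultimately show ?thesis using shifted by linarith
qed

definition diag_shift :: "('a \<Rightarrow> 'a \<Rightarrow> real) \<Rightarrow> real \<Rightarrow> 'a \<Rightarrow> 'a \<Rightarrow> real" where
  "diag_shift M q u v = M u v + (if u = v then q else 0)"

lemma mpow_diag_shift: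
  assumes "finite B" "x \<in> B"
  shows "mpow B (diag_shift M q) k x y = (\<Sum>i\<le>k. of_nat (k choose i) * q ^ i * mpow B M (k - i) x y)"
  using assms(2)
proof (induction k arbitrary: x)
  case 0
  then show ?case by simp
next
  case (Suc k)
  have diag: "(\<Sum>z\<in>B. (if x = z then q else 0) * mpow B (diag_shift M q) k z y)
      = q * mpow B (diag_shift M q) k x y"
  proof -
    have "(\<Sum>z\<in>B. (if x = z then q else 0) * mpow B (diag_shift M q) k z y)
        = (\<Sum>z\<in>B. if x = z then q * mpow B (diag_shift M q) k z y else 0)"
      by (rule sum.cong) auto
    then show ?thesis using Suc.prems assms(1) by simp
  qed
  have "(\<Sum>z\<in>B. M x z * mpow B (diag_shift M q) k z y)
      = (\<Sum>z\<in>B. \<Sum>i\<le>k. M x z * (of_nat (k choose i) * q ^ i * mpow B M (k - i) z y))"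
    by (rule sum.cong[OF refl]) (simp add: Suc.IH sum_distrib_left)
  also have "\<dots> = (\<Sum>i\<le>k. of_nat (k choose i) * q ^ i * mpow B M (Suc (k - i)) x y)"
    by (subst sum.swap) (simp add: sum_distrib_left mult_ac)
  finally have off_diag: "(\<Sum>z\<in>B. M x z * mpow B (diag_shift M q) k z y)
      = (\<Sum>i\<le>k. of_nat (k choose i) * q ^ i * mpow B M (Suc (k - i)) x y)" .
  have "mpow B (diag_shift M q) (Suc k) x y = (\<Sum>z\<in>B. M x z * mpow B (diag_shift M q) k z y)
        + (\<Sum>z\<in>B. (if x = z then q else 0) * mpow B (diag_shift M q) k z y)"
    by (simp add: diag_shift_def distrib_right sum.distrib)
  then show ?case
    unfolding diag off_diag Suc.IH[OF Suc.prems]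
    using binomial_sum_Suc[of k q "\<lambda>j. mpow B M j x y"] by simp
qed

lemma mexp_diag_shift:
  assumes "finite B" "x \<in> B"
  shows "mexp B t (diag_shift M q) x y = exp (q * t) * mexp B t M x y"
proof -
  define a where "a i = (q * t) ^ i / fact i" for i :: nat
  define b where "b j = t ^ j / fact j * mpow B M j x y" for j
  have exp_series: "exp (q * t) = (\<Sum>i. a i)"
    unfolding exp_def a_def by (simp add: divide_inverse mult_ac)
  have "summable (\<lambda>i. norm (a i))"
    using summable_norm_exp[of "q * t"] by (simp add: a_def divide_inverse mult_ac)
  moreover have "summable (\<lambda>i. norm (b i))"
    unfolding b_def by (rule summable_mexp_series(2)[OF assms])
  ultimately have "exp (q * t) * mexp B t M x y = (\<Sum>k. \<Sum>i\<le>k. a i * b (k - i))"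
    unfolding exp_series mexp_def b_def[symmetric] by (rule Cauchy_product)
  also have "\<dots> = (\<Sum>k. t ^ k / fact k * mpow B (diag_shift M q) k x y)"
  proof (rule suminf_cong)
    fix k
    have "a i * b (k - i) = t ^ k / fact k * (of_nat (k choose i) * q ^ i * mpow B M (k - i) x y)"
      if "i \<le> k" for i
    proof -
      have "a i * b (k - i) = q ^ i * (t ^ i * t ^ (k - i)) * mpow B M (k - i) x y / (fact i * fact (k - i))"
        by (simp add: a_def b_def power_mult_distrib field_simps)
      then show ?thesis
        unfolding power_add[symmetric] binomial_fact[OF that] using that by (simp add: field_simps)
    qed
    then show "(\<Sum>i\<le>k. a i * b (k - i)) = t ^ k / fact k * mpow B (diag_shift M q) k x y"
      by (simp add: mpow_diag_shift[OF assms] sum_distrib_left)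
  qed
  finally show ?thesis unfolding mexp_def by simp
qed

lemma mpow_nonneg:
  assumes "\<forall>u\<in>B. \<forall>v\<in>B. M u v \<ge> 0" "x \<in> B"
  shows "mpow B M k x y \<ge> 0"
  using assms(2)
  by (induction k arbitrary: x) (auto intro!: sum_nonneg mult_nonneg_nonneg simp: assms(1))

lemma mexp_nonneg:
  assumes "finite B" "\<forall>u\<in>B. \<forall>v\<in>B. M u v \<ge> 0" "x \<in> B" "t \<ge> 0"
  shows "mexp B t M x y \<ge> 0"
  unfolding mexp_def
  by (intro suminf_nonneg summable_mexp_series(1) assms(1,3) mult_nonneg_nonneg
      mpow_nonneg[OF assms(2,3)]) (use assms(4) in simp)

lemma mpow_mono_index_set:
  assumes "finite B'" "B \<subseteq> B'" "\<forall>u\<in>B'. \<forall>v\<in>B'. M u v \<ge> 0" "x \<in> B"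
  shows "mpow B M k x y \<le> mpow B' M k x y"
  using assms(4)
proof (induction k arbitrary: x)
  case 0
  then show ?case by simp
next
  case (Suc k)
  have "(\<Sum>z\<in>B. M x z * mpow B M k z y) \<le> (\<Sum>z\<in>B. M x z * mpow B' M k z y)"
    by (intro sum_mono mult_left_mono Suc.IH) (use assms Suc.prems in auto)
  also have "\<dots> \<le> (\<Sum>z\<in>B'. M x z * mpow B' M k z y)"
    by (rule sum_mono2[OF assms(1,2)])
       (use assms Suc.prems in \<open>auto intro!: mult_nonneg_nonneg mpow_nonneg[OF assms(3)]\<close>)
  finally show ?case by simp
qed

lemma mexp_mono_index_set:
  assumes "finite B'" "B \<subseteq> B'" "\<forall>u\<in>B'. \<forall>v\<in>B'. M u v \<ge> 0" "x \<in> B" "t \<ge> 0"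
  shows "mexp B t M x y \<le> mexp B' t M x y"
proof -
  have "finite B" using assms(1,2) finite_subset by blast
  then show ?thesis
    unfolding mexp_def
    by (intro suminf_le summable_mexp_series(1) assms(1,4) subsetD[OF assms(2,4)]
        mult_left_mono mpow_mono_index_set[OF assms(1-4)]) (use assms(5) in simp)
qed

lemma mexp_row_sum:
  assumes "finite B" "\<forall>z\<in>B. (\<Sum>y\<in>B. M z y) = 0" "x \<in> B"
  shows "(\<Sum>y\<in>B. mexp B t M x y) = 1"
proof -
  have higher: "(\<Sum>y\<in>B. t ^ n / fact n * mpow B M n x y) = 0" if "n \<noteq> 0" for n
  proof -
    obtain k where n: "n = Suc k" using \<open>n \<noteq> 0\<close> not0_implies_Suc by blast
    have "(\<Sum>y\<in>B. mpow B M (Suc k) x y) = (\<Sum>y\<in>B. \<Sum>z\<in>B. mpow B M k x z * M z y)"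
      by (intro sum.cong refl mpow_Suc_right assms(1,3))
    also have "\<dots> = (\<Sum>z\<in>B. mpow B M k x z * (\<Sum>y\<in>B. M z y))"
      by (subst sum.swap) (simp add: sum_distrib_left)
    also have "\<dots> = 0" using assms(2) by simp
    finally show ?thesis unfolding n by (simp only: sum_distrib_left[symmetric])
  qed
  have "(\<Sum>y\<in>B. mexp B t M x y) = (\<Sum>n. \<Sum>y\<in>B. t ^ n / fact n * mpow B M n x y)"
    unfolding mexp_def by (intro suminf_sum[symmetric] summable_mexp_series(1) assms(1,3))
  also have "\<dots> = (\<Sum>n\<in>{0}. \<Sum>y\<in>B. t ^ n / fact n * mpow B M n x y)"
    by (rule suminf_finite) (use higher in auto)
  also have "\<dots> = 1" using assms(1,3) by simp
  finally show ?thesis .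
qed

lemma mexp_invariant:
  assumes "finite B" "\<forall>y\<in>B. (\<Sum>x\<in>B. \<nu> x * M x y) = 0" "y \<in> B"
  shows "(\<Sum>x\<in>B. \<nu> x * mexp B t M x y) = \<nu> y"
proof -
  have higher: "(\<Sum>x\<in>B. \<nu> x * (t ^ n / fact n * mpow B M n x y)) = 0" if "n \<noteq> 0" for n
  proof -
    obtain k where n: "n = Suc k" using \<open>n \<noteq> 0\<close> not0_implies_Suc by blast
    have "(\<Sum>x\<in>B. \<nu> x * mpow B M (Suc k) x y) = (\<Sum>x\<in>B. \<Sum>z\<in>B. \<nu> x * M x z * mpow B M k z y)"
      by (simp add: sum_distrib_left mult_ac)
    also have "\<dots> = (\<Sum>z\<in>B. (\<Sum>x\<in>B. \<nu> x * M x z) * mpow B M k z y)"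
      by (subst sum.swap) (simp add: sum_distrib_right)
    also have "\<dots> = 0" using assms(2) by simp
    finally have "(\<Sum>x\<in>B. \<nu> x * mpow B M n x y) = 0" unfolding n .
    moreover have "(\<Sum>x\<in>B. \<nu> x * (t ^ n / fact n * mpow B M n x y))
        = t ^ n / fact n * (\<Sum>x\<in>B. \<nu> x * mpow B M n x y)"
      by (simp add: sum_distrib_left mult_ac del: mpow.simps)
    ultimately show ?thesis by simp
  qed
  have "(\<Sum>x\<in>B. \<nu> x * mexp B t M x y) = (\<Sum>x\<in>B. \<Sum>n. \<nu> x * (t ^ n / fact n * mpow B M n x y))"
    unfolding mexp_def by (intro sum.cong refl suminf_mult[symmetric] summable_mexp_series(1) assms(1))
  also have "\<dots> = (\<Sum>n. \<Sum>x\<in>B. \<nu> x * (t ^ n / fact n * mpow B M n x y))"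
    by (intro suminf_sum[symmetric] summable_mult summable_mexp_series(1) assms(1))
  also have "\<dots> = (\<Sum>n\<in>{0}. \<Sum>x\<in>B. \<nu> x * (t ^ n / fact n * mpow B M n x y))"
    by (rule suminf_finite) (use higher in auto)
  also have "\<dots> = \<nu> y" using assms(1,3) by (simp add: if_distrib cong: if_cong)
  finally show ?thesis .
qed

section \<open>Chains with a target set\<close>

locale markov_hitting =
  fixes \<Omega> :: "'a set" and R :: "'a \<Rightarrow> 'a \<Rightarrow> real" and \<nu> \<mu> :: "'a \<Rightarrow> real" and A :: "'a set"
  assumes finite_states: "finite \<Omega>" and states_nonempty: "\<Omega> \<noteq> {}"
    and rates: "\<forall>x\<in>\<Omega>. \<forall>y\<in>\<Omega>. R x y \<ge> 0 \<and> R x x = 0"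
    and irreducible: "irreducible \<Omega> R"
    and stationary: "stationary \<Omega> R \<nu>"
    and target_subset: "A \<subseteq> \<Omega>"
    and initial_prob: "is_prob \<Omega> \<mu>"
begin

abbreviation "L \<equiv> gen \<Omega> R"
abbreviation "B \<equiv> \<Omega> - A"
abbreviation mean :: "('a \<Rightarrow> real) \<Rightarrow> real" where "mean \<phi> \<equiv> \<Sum>x\<in>\<Omega>. \<nu> x * \<phi> x"
abbreviation sqnorm :: "('a \<Rightarrow> real) \<Rightarrow> real" where "sqnorm \<phi> \<equiv> \<Sum>x\<in>\<Omega>. \<nu> x * (\<phi> x)\<^sup>2"

lemma finite_outside: "finite B"
  using finite_states by simp

lemma rate_nonneg: "x \<in> \<Omega> \<Longrightarrow> y \<in> \<Omega> \<Longrightarrow> R x y \<ge> 0"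
  using rates by auto

lemma rate_diag: "x \<in> \<Omega> \<Longrightarrow> R x x = 0"
  using rates by auto

lemma stationary_nonneg: "x \<in> \<Omega> \<Longrightarrow> \<nu> x \<ge> 0"
  using stationary unfolding stationary_def is_prob_def by auto

lemma stationary_sum: "(\<Sum>x\<in>\<Omega>. \<nu> x) = 1"
  using stationary unfolding stationary_def is_prob_def by auto

lemma stationary_gen: "y \<in> \<Omega> \<Longrightarrow> (\<Sum>x\<in>\<Omega>. \<nu> x * L x y) = 0"
  using stationary unfolding stationary_def by auto

lemma initial_nonneg: "x \<in> \<Omega> \<Longrightarrow> \<mu> x \<ge> 0"
  using initial_prob unfolding is_prob_def by auto

lemma initial_sum: "(\<Sum>x\<in>\<Omega>. \<mu> x) = 1"
  using initial_prob unfolding is_prob_def by auto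

lemma L2norm_nonneg: "L2norm \<Omega> \<nu> f \<ge> 0"
  unfolding L2norm_def
  by (intro real_sqrt_ge_zero sum_nonneg mult_nonneg_nonneg stationary_nonneg) auto

lemma gen_eq: "x \<in> \<Omega> \<Longrightarrow> L x y = R x y - (if x = y then (\<Sum>z\<in>\<Omega>. R x z) else 0)"
  using rate_diag[of x] finite_states by (auto simp: gen_def sum.remove)

lemma gen_row_sum: "x \<in> \<Omega> \<Longrightarrow> (\<Sum>y\<in>\<Omega>. L x y) = 0"
proof -
  assume x: "x \<in> \<Omega>"
  have "(\<Sum>y\<in>\<Omega> - {x}. L x y) = (\<Sum>y\<in>\<Omega> - {x}. R x y)"
    by (rule sum.cong) (auto simp: gen_def)
  then show ?thesis using x finite_states by (simp add: sum.remove gen_def)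
qed

lemma gen_row_sum_outside: "z \<in> B \<Longrightarrow> (\<Sum>y\<in>B. L z y) = - rate_to R z A"
proof -
  assume z: "z \<in> B"
  have "(\<Sum>y\<in>B. L z y) = (\<Sum>y\<in>B. R z y - (if z = y then (\<Sum>w\<in>\<Omega>. R z w) else 0))"
    by (rule sum.cong) (use z gen_eq in auto)
  also have "\<dots> = (\<Sum>y\<in>B. R z y) - (\<Sum>w\<in>\<Omega>. R z w)"
    using z finite_outside by (simp add: sum_subtractf)
  also have "(\<Sum>w\<in>\<Omega>. R z w) = (\<Sum>y\<in>B. R z y) + (\<Sum>y\<in>A. R z y)"
    using sum.subset_diff[OF target_subset finite_states, of "R z"] by simp
  finally show ?thesis unfolding rate_to_def by simp
qed

definition positive_rate_graph :: "('a \<times> 'a) set" where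
  "positive_rate_graph = {(u, v). u \<in> \<Omega> \<and> v \<in> \<Omega> \<and> u \<noteq> v \<and> R u v > 0}"

lemma positive_rate_graph_connected: "x \<in> \<Omega> \<Longrightarrow> y \<in> \<Omega> \<Longrightarrow> (x, y) \<in> positive_rate_graph\<^sup>*"
  using irreducible unfolding irreducible_def positive_rate_graph_def by blast

text \<open>A state of zero stationary mass forces, by the balance equation at that state,
  zero mass at every state leading to it; irreducibility then spreads this to all of \<open>\<Omega>\<close>.\<close>

lemma stationary_pos: "x \<in> \<Omega> \<Longrightarrow> \<nu> x > 0"
proof (rule ccontr)
  assume x: "x \<in> \<Omega>" and "\<not> \<nu> x > 0"
  then have zero_at_x: "\<nu> x = 0" using stationary_nonneg[OF x] by simp
  have backward: "\<nu> u = 0" if uv: "(u, v) \<in> positive_rate_graph" and zero_at_v: "\<nu> v = 0" for u v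
  proof -
    have u: "u \<in> \<Omega>" and v: "v \<in> \<Omega>" and "u \<noteq> v" and "R u v > 0"
      using uv by (auto simp: positive_rate_graph_def)
    have "(\<Sum>w\<in>\<Omega> - {v}. \<nu> w * L w v) = (\<Sum>w\<in>\<Omega> - {v}. \<nu> w * R w v)"
      by (rule sum.cong) (auto simp: gen_def)
    then have "(\<Sum>w\<in>\<Omega> - {v}. \<nu> w * R w v) = 0"
      using stationary_gen[OF v] v finite_states zero_at_v by (simp add: sum.remove)
    then have "\<forall>w\<in>\<Omega> - {v}. \<nu> w * R w v = 0"
      using finite_states stationary_nonneg rate_nonneg v
      by (subst (asm) sum_nonneg_eq_0_iff) (auto intro!: mult_nonneg_nonneg)
    then show ?thesis using u \<open>u \<noteq> v\<close> \<open>R u v > 0\<close> by auto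
  qed
  have "\<nu> z = 0" if "z \<in> \<Omega>" for z
    using positive_rate_graph_connected[OF that x]
    by (induction rule: converse_rtrancl_induct) (use zero_at_x backward in blast)+
  then have "(\<Sum>z\<in>\<Omega>. \<nu> z) = 0" by simp
  then show False using stationary_sum by simp
qed

definition total_rate :: real where
  "total_rate = (\<Sum>u\<in>\<Omega>. \<Sum>v\<in>\<Omega>. R u v)"

lemma diag_shift_gen_nonneg: "\<forall>u\<in>\<Omega>. \<forall>v\<in>\<Omega>. diag_shift L total_rate u v \<ge> 0"
proof (intro ballI)
  fix u v assume u: "u \<in> \<Omega>" and v: "v \<in> \<Omega>"
  have "(\<Sum>z\<in>\<Omega>. R u z) \<le> total_rate"
    unfolding total_rate_def
    using member_le_sum[of u \<Omega> "\<lambda>u. \<Sum>v\<in>\<Omega>. R u v"] u finite_states rate_nonneg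
    by (auto intro: sum_nonneg)
  then show "diag_shift L total_rate u v \<ge> 0"
    using u v rate_nonneg[of u v] by (cases "u = v") (auto simp: diag_shift_def gen_eq)
qed

text \<open>Adding \<open>total_rate\<close> to the diagonal makes the generator entrywise nonnegative,
  so positivity and monotonicity of \<open>exp (t L)\<close> reduce to those of a nonnegative power series.\<close>

lemma mexp_gen_eq_diag_shift:
  "finite S \<Longrightarrow> x \<in> S \<Longrightarrow> mexp S t L x y = exp (- (total_rate * t)) * mexp S t (diag_shift L total_rate) x y"
  using mexp_diag_shift[of S x t L total_rate y] by (simp add: exp_minus field_simps)

lemma transition_nonneg: "x \<in> \<Omega> \<Longrightarrow> t \<ge> 0 \<Longrightarrow> mexp \<Omega> t L x y \<ge> 0"
  by (simp add: mexp_gen_eq_diag_shift finite_states mexp_nonneg diag_shift_gen_nonneg)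

lemma killed_transition_nonneg: "x \<in> B \<Longrightarrow> t \<ge> 0 \<Longrightarrow> mexp B t L x y \<ge> 0"
  using diag_shift_gen_nonneg by (simp add: mexp_gen_eq_diag_shift finite_outside mexp_nonneg)

lemma killed_transition_le: "x \<in> B \<Longrightarrow> t \<ge> 0 \<Longrightarrow> mexp B t L x y \<le> mexp \<Omega> t L x y"
  using mexp_mono_index_set[OF finite_states _ diag_shift_gen_nonneg, of B x t y]
  by (simp add: mexp_gen_eq_diag_shift finite_outside finite_states)

lemma transition_row_sum: "x \<in> \<Omega> \<Longrightarrow> (\<Sum>y\<in>\<Omega>. mexp \<Omega> t L x y) = 1"
  by (rule mexp_row_sum[OF finite_states]) (use gen_row_sum in auto)

lemma transition_invariant: "y \<in> \<Omega> \<Longrightarrow> (\<Sum>x\<in>\<Omega>. \<nu> x * mexp \<Omega> t L x y) = \<nu> y"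
  by (rule mexp_invariant[OF finite_states]) (use stationary_gen in auto)

end

section \<open>Dirichlet form and \<open>L\<^sup>2\<close> decay\<close>

context markov_hitting
begin

definition gen_form :: "('a \<Rightarrow> real) \<Rightarrow> ('a \<Rightarrow> real) \<Rightarrow> real" where
  "gen_form \<phi> \<psi> = (\<Sum>x\<in>\<Omega>. \<Sum>y\<in>\<Omega>. \<nu> x * L x y * \<phi> x * \<psi> y)"

lemma stationary_inflow: "y \<in> \<Omega> \<Longrightarrow> (\<Sum>x\<in>\<Omega>. \<nu> x * R x y) = \<nu> y * (\<Sum>z\<in>\<Omega>. R y z)"
proof -
  assume y: "y \<in> \<Omega>"
  have "0 = (\<Sum>x\<in>\<Omega>. \<nu> x * L x y)" using stationary_gen[OF y] by simp
  also have "\<dots> = (\<Sum>x\<in>\<Omega>. \<nu> x * R x y - (if x = y then \<nu> x * (\<Sum>z\<in>\<Omega>. R x z) else 0))"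
    by (intro sum.cong refl) (simp add: gen_eq right_diff_distrib)
  also have "\<dots> = (\<Sum>x\<in>\<Omega>. \<nu> x * R x y) - \<nu> y * (\<Sum>z\<in>\<Omega>. R y z)"
    using y finite_states by (simp add: sum_subtractf)
  finally show ?thesis by simp
qed

lemma dirichlet_form_eq:
  "- gen_form \<phi> \<phi> = (\<Sum>x\<in>\<Omega>. \<Sum>y\<in>\<Omega>. \<nu> x * R x y * (\<phi> x - \<phi> y)\<^sup>2) / 2"
proof -
  define W where "W = (\<Sum>x\<in>\<Omega>. \<nu> x * (\<phi> x)\<^sup>2 * (\<Sum>z\<in>\<Omega>. R x z))"
  define X where "X = (\<Sum>x\<in>\<Omega>. \<Sum>y\<in>\<Omega>. \<nu> x * R x y * \<phi> x * \<phi> y)"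
  have "gen_form \<phi> \<phi> = (\<Sum>x\<in>\<Omega>. \<Sum>y\<in>\<Omega>. \<nu> x * R x y * \<phi> x * \<phi> y
                         - (if x = y then \<nu> x * (\<phi> x)\<^sup>2 * (\<Sum>z\<in>\<Omega>. R x z) else 0))"
    unfolding gen_form_def by (intro sum.cong refl) (auto simp: gen_eq algebra_simps power2_eq_square)
  also have "\<dots> = X - W"
    unfolding X_def W_def using finite_states by (simp add: sum_subtractf)
  finally have form: "gen_form \<phi> \<phi> = X - W" .
  have out: "(\<Sum>x\<in>\<Omega>. \<Sum>y\<in>\<Omega>. \<nu> x * R x y * (\<phi> x)\<^sup>2) = W"
    unfolding W_def by (intro sum.cong refl) (simp add: sum_distrib_left sum_distrib_right mult_ac)
  have "(\<Sum>x\<in>\<Omega>. \<Sum>y\<in>\<Omega>. \<nu> x * R x y * (\<phi> y)\<^sup>2) = (\<Sum>y\<in>\<Omega>. (\<Sum>x\<in>\<Omega>. \<nu> x * R x y) * (\<phi> y)\<^sup>2)"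
    by (subst sum.swap) (simp add: sum_distrib_right)
  also have "\<dots> = W"
    unfolding W_def by (intro sum.cong refl) (simp add: stationary_inflow mult_ac)
  finally have inflow: "(\<Sum>x\<in>\<Omega>. \<Sum>y\<in>\<Omega>. \<nu> x * R x y * (\<phi> y)\<^sup>2) = W" .
  have "(\<Sum>x\<in>\<Omega>. \<Sum>y\<in>\<Omega>. \<nu> x * R x y * (\<phi> x - \<phi> y)\<^sup>2)
     = (\<Sum>x\<in>\<Omega>. \<Sum>y\<in>\<Omega>. \<nu> x * R x y * (\<phi> x)\<^sup>2 + \<nu> x * R x y * (\<phi> y)\<^sup>2
                        - 2 * (\<nu> x * R x y * \<phi> x * \<phi> y))"
    by (intro sum.cong refl) (simp add: power2_eq_square algebra_simps)
  also have "\<dots> = (\<Sum>x\<in>\<Omega>. \<Sum>y\<in>\<Omega>. \<nu> x * R x y * (\<phi> x)\<^sup>2)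
      + (\<Sum>x\<in>\<Omega>. \<Sum>y\<in>\<Omega>. \<nu> x * R x y * (\<phi> y)\<^sup>2) - 2 * X"
    unfolding X_def by (simp only: sum.distrib sum_subtractf sum_distrib_left)
  also have "\<dots> = W + W - 2 * X"
    unfolding out inflow ..
  finally show ?thesis using form by simp
qed

lemma gen_form_diag_nonpos: "gen_form \<phi> \<phi> \<le> 0"
proof -
  have "0 \<le> (\<Sum>x\<in>\<Omega>. \<Sum>y\<in>\<Omega>. \<nu> x * R x y * (\<phi> x - \<phi> y)\<^sup>2) / 2"
    by (intro divide_nonneg_nonneg sum_nonneg mult_nonneg_nonneg stationary_nonneg rate_nonneg) auto
  then show ?thesis using dirichlet_form_eq[of \<phi>] by linarith
qed

lemma dirichlet_form_zero_imp_const: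
  assumes "gen_form \<phi> \<phi> = 0" "x \<in> \<Omega>" "y \<in> \<Omega>"
  shows "\<phi> x = \<phi> y"
proof -
  have term_nonneg: "0 \<le> \<nu> u * R u v * (\<phi> u - \<phi> v)\<^sup>2" if "u \<in> \<Omega>" "v \<in> \<Omega>" for u v
    using that by (intro mult_nonneg_nonneg stationary_nonneg rate_nonneg) auto
  have "(\<Sum>u\<in>\<Omega>. \<Sum>v\<in>\<Omega>. \<nu> u * R u v * (\<phi> u - \<phi> v)\<^sup>2) = 0"
    using dirichlet_form_eq[of \<phi>] assms(1) by simp
  then have zero_terms: "\<forall>u\<in>\<Omega>. \<forall>v\<in>\<Omega>. \<nu> u * R u v * (\<phi> u - \<phi> v)\<^sup>2 = 0"
    using finite_states term_nonneg by (simp add: sum_nonneg_eq_0_iff sum_nonneg)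
  have edge: "\<phi> u = \<phi> v" if "(u, v) \<in> positive_rate_graph" for u v
  proof -
    have u: "u \<in> \<Omega>" and v: "v \<in> \<Omega>" and "R u v > 0"
      using that by (auto simp: positive_rate_graph_def)
    have "\<nu> u * R u v * (\<phi> u - \<phi> v)\<^sup>2 = 0" using zero_terms u v by blast
    then show ?thesis using stationary_pos[OF u] \<open>R u v > 0\<close> by simp
  qed
  show ?thesis
    using positive_rate_graph_connected[OF assms(2,3)]
    by (induction rule: converse_rtrancl_induct) (auto dest: edge)
qed

lemma gen_form_sym_gen:
  "(\<Sum>x\<in>\<Omega>. \<nu> x * \<phi> x * (\<Sum>y\<in>\<Omega>. sym_gen \<Omega> R \<nu> x y * \<psi> y)) = (gen_form \<phi> \<psi> + gen_form \<psi> \<phi>) / 2"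
proof -
  have "(\<Sum>x\<in>\<Omega>. \<nu> x * \<phi> x * (\<Sum>y\<in>\<Omega>. sym_gen \<Omega> R \<nu> x y * \<psi> y))
      = (\<Sum>x\<in>\<Omega>. \<Sum>y\<in>\<Omega>. (\<nu> x * L x y * \<phi> x * \<psi> y + \<nu> y * L y x * \<psi> y * \<phi> x) / 2)"
    unfolding sum_distrib_left using stationary_pos
    by (intro sum.cong refl) (simp add: sym_gen_def adj_gen_def field_simps less_imp_neq[symmetric])
  also have "\<dots> = (\<Sum>x\<in>\<Omega>. \<Sum>y\<in>\<Omega>. \<nu> x * L x y * \<phi> x * \<psi> y + \<nu> y * L y x * \<psi> y * \<phi> x) / 2"
    by (simp only: sum_divide_distrib)
  also have "\<dots> = (gen_form \<phi> \<psi> + (\<Sum>x\<in>\<Omega>. \<Sum>y\<in>\<Omega>. \<nu> y * L y x * \<psi> y * \<phi> x)) / 2"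
    unfolding gen_form_def by (simp only: sum.distrib)
  also have "(\<Sum>x\<in>\<Omega>. \<Sum>y\<in>\<Omega>. \<nu> y * L y x * \<psi> y * \<phi> x) = gen_form \<psi> \<phi>"
    unfolding gen_form_def by (rule sum.swap)
  finally show ?thesis .
qed

lemma gen_form_const_left: "gen_form (\<lambda>_. c) \<psi> = 0"
proof -
  have "gen_form (\<lambda>_. c) \<psi> = c * (\<Sum>y\<in>\<Omega>. (\<Sum>x\<in>\<Omega>. \<nu> x * L x y) * \<psi> y)"
    unfolding gen_form_def
    by (subst sum.swap) (simp add: sum_distrib_left sum_distrib_right mult_ac)
  then show ?thesis by (simp add: stationary_gen)
qed

lemma gen_form_const_right: "gen_form \<phi> (\<lambda>_. c) = 0"
proof -
  have "gen_form \<phi> (\<lambda>_. c) = c * (\<Sum>x\<in>\<Omega>. \<nu> x * \<phi> x * (\<Sum>y\<in>\<Omega>. L x y))"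
    unfolding gen_form_def by (simp add: sum_distrib_left mult_ac)
  then show ?thesis by (simp add: gen_row_sum)
qed

lemma gen_form_add_scaled:
  "gen_form (\<lambda>x. g x + e * \<phi> x) (\<lambda>x. g x + e * \<phi> x)
     = gen_form g g + e * (gen_form g \<phi> + gen_form \<phi> g) + e\<^sup>2 * gen_form \<phi> \<phi>"
proof -
  have "gen_form (\<lambda>x. g x + e * \<phi> x) (\<lambda>x. g x + e * \<phi> x)
     = (\<Sum>x\<in>\<Omega>. \<Sum>y\<in>\<Omega>. \<nu> x * L x y * g x * g y
          + e * (\<nu> x * L x y * g x * \<phi> y + \<nu> x * L x y * \<phi> x * g y)
          + e\<^sup>2 * (\<nu> x * L x y * \<phi> x * \<phi> y))"
    unfolding gen_form_def by (intro sum.cong refl) (simp add: power2_eq_square algebra_simps)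
  then show ?thesis
    unfolding gen_form_def by (simp add: sum.distrib sum_distrib_left distrib_left)
qed

lemma gen_form_scale: "gen_form (\<lambda>x. c * \<phi> x) (\<lambda>x. c * \<phi> x) = c\<^sup>2 * gen_form \<phi> \<phi>"
  unfolding gen_form_def by (simp add: sum_distrib_left power2_eq_square mult_ac)

lemma gen_form_cong: "(\<And>x. x \<in> \<Omega> \<Longrightarrow> \<phi> x = \<phi>' x) \<Longrightarrow> gen_form \<phi> \<phi> = gen_form \<phi>' \<phi>'"
  unfolding gen_form_def by (intro sum.cong refl) auto

definition poincare_ineq :: "real \<Rightarrow> bool" where
  "poincare_ineq \<gamma> \<longleftrightarrow> (\<forall>\<phi>. mean \<phi> = 0 \<longrightarrow> \<gamma> * sqnorm \<phi> \<le> - gen_form \<phi> \<phi>)"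

definition semigroup :: "real \<Rightarrow> ('a \<Rightarrow> real) \<Rightarrow> 'a \<Rightarrow> real" where
  "semigroup t g x = (\<Sum>y\<in>\<Omega>. mexp \<Omega> t L x y * g y)"

lemma has_real_derivative_semigroup:
  assumes x: "x \<in> \<Omega>"
  shows "((\<lambda>t. semigroup t g x) has_real_derivative (\<Sum>z\<in>\<Omega>. L x z * semigroup t g z)) (at t)"
proof -
  have "((\<lambda>t. semigroup t g x) has_real_derivative
          (\<Sum>y\<in>\<Omega>. (\<Sum>z\<in>\<Omega>. L x z * mexp \<Omega> t L z y) * g y)) (at t)"
    unfolding semigroup_def
    by (intro DERIV_sum DERIV_cmult_right has_real_derivative_mexp_left finite_states x)
  also have "(\<Sum>y\<in>\<Omega>. (\<Sum>z\<in>\<Omega>. L x z * mexp \<Omega> t L z y) * g y)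
      = (\<Sum>y\<in>\<Omega>. \<Sum>z\<in>\<Omega>. L x z * (mexp \<Omega> t L z y * g y))"
    by (simp add: sum_distrib_left sum_distrib_right mult_ac)
  also have "\<dots> = (\<Sum>z\<in>\<Omega>. L x z * semigroup t g z)"
    unfolding semigroup_def by (subst sum.swap) (simp add: sum_distrib_left)
  finally show ?thesis .
qed

lemma mean_semigroup: "mean (semigroup t g) = mean g"
proof -
  have "mean (semigroup t g) = (\<Sum>x\<in>\<Omega>. \<Sum>y\<in>\<Omega>. \<nu> x * mexp \<Omega> t L x y * g y)"
    unfolding semigroup_def by (simp add: sum_distrib_left mult_ac)
  also have "\<dots> = (\<Sum>y\<in>\<Omega>. (\<Sum>x\<in>\<Omega>. \<nu> x * mexp \<Omega> t L x y) * g y)"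
    by (subst sum.swap) (simp add: sum_distrib_right)
  finally show ?thesis by (simp add: transition_invariant)
qed

lemma semigroup_0: "x \<in> \<Omega> \<Longrightarrow> semigroup 0 g x = g x"
proof -
  have "semigroup 0 g x = (\<Sum>y\<in>\<Omega>. if x = y then g y else 0)"
    unfolding semigroup_def mexp_0 by (rule sum.cong) auto
  then show "x \<in> \<Omega> \<Longrightarrow> ?thesis" using finite_states by simp
qed

text \<open>Along the semigroup the squared norm has derivative \<open>2 gen_form\<close>, so under a
  Poincare inequality with constant \<open>\<gamma>\<close> the quantity \<open>exp (2\<gamma>t) sqnorm\<close> is nonincreasing.\<close>

lemma sqnorm_semigroup_decay:
  assumes poincare: "poincare_ineq \<gamma>" and mean_zero: "mean g = 0" and t: "t \<ge> 0"
  shows "sqnorm (semigroup t g) \<le> exp (- (2 * \<gamma> * t)) * sqnorm g"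
proof -
  define u where "u s x = semigroup s g x" for s x
  define D where "D s = exp (2 * \<gamma> * s) * (\<Sum>x\<in>\<Omega>. \<nu> x * (u s x * u s x))" for s
  define D' where "D' s = exp (2 * \<gamma> * s) * (2 * \<gamma>) * (\<Sum>x\<in>\<Omega>. \<nu> x * (u s x * u s x))
    + (\<Sum>x\<in>\<Omega>. \<nu> x * ((\<Sum>z\<in>\<Omega>. L x z * u s z) * u s x + (\<Sum>z\<in>\<Omega>. L x z * u s z) * u s x))
      * exp (2 * \<gamma> * s)" for s
  have "(D has_real_derivative D' s) (at s)" for s
    unfolding D_def D'_def u_def
    by (intro DERIV_mult DERIV_sum DERIV_cmult has_real_derivative_semigroup)
       (auto intro!: derivative_eq_intros)
  moreover have "D' s \<le> 0" for s
  proof -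
    have "\<gamma> * sqnorm (u s) \<le> - gen_form (u s) (u s)"
      using poincare mean_semigroup mean_zero unfolding poincare_ineq_def u_def by simp
    moreover have "D' s = 2 * exp (2 * \<gamma> * s) * (\<gamma> * sqnorm (u s) + gen_form (u s) (u s))"
      unfolding D'_def gen_form_def
      by (simp add: sum_distrib_left sum_distrib_right sum.distrib[symmetric]
          power2_eq_square algebra_simps)
    ultimately show ?thesis by (simp add: mult_nonneg_nonpos)
  qed
  ultimately have "D t \<le> D 0"
    using DERIV_nonpos_imp_nonincreasing[OF t, of D] by blast
  then have "exp (2 * \<gamma> * t) * sqnorm (semigroup t g) \<le> sqnorm g"
    unfolding D_def u_def by (simp add: semigroup_0 power2_eq_square)
  then show ?thesis by (simp add: exp_minus field_simps)
qed

end

section \<open>The spectral gap as a minimum of the Rayleigh quotient\<close>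

lemma quadratic_nonneg_imp_linear_coeff_zero:
  fixes a b :: real
  assumes "\<forall>e. 0 \<le> e * a + e\<^sup>2 * b"
  shows "a = 0"
proof (rule ccontr)
  assume a: "a \<noteq> 0"
  define c where "c = \<bar>b\<bar> + 1"
  have c: "c > 0" "b \<le> c" unfolding c_def by auto
  define e where "e = - a / (2 * c)"
  have "e\<^sup>2 * b \<le> e\<^sup>2 * c" using c by (intro mult_left_mono) auto
  also have "e\<^sup>2 * c = a\<^sup>2 / (4 * c)" unfolding e_def using c by (simp add: power2_eq_square field_simps)
  also have "a\<^sup>2 / (4 * c) < a\<^sup>2 / (2 * c)" using c a by (simp add: divide_strict_left_mono)
  also have "a\<^sup>2 / (2 * c) = - (e * a)" unfolding e_def by (simp add: power2_eq_square)
  finally show False using assms[rule_format, of e] by linarith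
qed

context markov_hitting
begin

lemma sqnorm_nonneg: "sqnorm \<phi> \<ge> 0"
  by (intro sum_nonneg mult_nonneg_nonneg stationary_nonneg) auto

lemma sqnorm_eq_0_imp: "sqnorm \<phi> = 0 \<Longrightarrow> x \<in> \<Omega> \<Longrightarrow> \<phi> x = 0"
  using finite_states stationary_nonneg stationary_pos[of x]
  by (subst (asm) sum_nonneg_eq_0_iff) auto

text \<open>The Rayleigh quotient is minimised over the unit sphere of mean-zero functions.
  Since \<open>\<nu> > 0\<close> that sphere is bounded coordinatewise; fixing the values off \<open>\<Omega>\<close>
  makes it compact in the product topology.\<close>

definition unit_mean_zero :: "('a \<Rightarrow> real) set" where
  "unit_mean_zero = {\<phi>. (\<forall>x. x \<notin> \<Omega> \<longrightarrow> \<phi> x = 0) \<and> mean \<phi> = 0 \<and> sqnorm \<phi> = 1}"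

lemma abs_le_of_sqnorm_eq_1:
  assumes "sqnorm \<phi> = 1" "i \<in> \<Omega>"
  shows "\<bar>\<phi> i\<bar> \<le> 1 / \<nu> i + 1"
proof -
  have pos: "\<nu> i > 0" using stationary_pos[OF assms(2)] .
  have "\<nu> i * (\<phi> i)\<^sup>2 \<le> 1"
    using member_le_sum[of i \<Omega> "\<lambda>x. \<nu> x * (\<phi> x)\<^sup>2"] assms finite_states stationary_nonneg by auto
  then have "\<bar>\<phi> i\<bar>\<^sup>2 \<le> 1 / \<nu> i" using pos by (simp add: field_simps)
  also have "1 / \<nu> i \<le> (1 / \<nu> i + 1)\<^sup>2" using pos by (simp add: power2_eq_square field_simps)
  finally show ?thesis by (rule power2_le_imp_le) (use pos in simp)
qed

lemma compact_unit_mean_zero: "compact unit_mean_zero"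
proof -
  define I :: "'a \<Rightarrow> real set" where
    "I i = (if i \<in> \<Omega> then {- (1 / \<nu> i + 1) .. 1 / \<nu> i + 1} else {0})" for i
  have "compactin (product_topology (\<lambda>i. euclidean) UNIV) (PiE UNIV I)"
    unfolding compactin_PiE by (auto simp: I_def)
  then have box: "compact (PiE UNIV I)" unfolding euclidean_product_topology by simp
  have "unit_mean_zero = (PiE UNIV I \<inter> {\<phi>. mean \<phi> = 0}) \<inter> {\<phi>. sqnorm \<phi> = 1}"
    unfolding unit_mean_zero_def using abs_le_of_sqnorm_eq_1
    by (fastforce simp: PiE_iff I_def abs_le_iff split: if_splits)
  then show ?thesis
    by (simp only:) (intro compact_Int_closed box closed_Collect_eq continuous_intros
        continuous_on_product_coordinates)
qed

lemma normalized_in_unit_mean_zero: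
  assumes "mean \<phi> = 0" "sqnorm \<phi> > 0"
  shows "(\<lambda>x. if x \<in> \<Omega> then \<phi> x / sqrt (sqnorm \<phi>) else 0) \<in> unit_mean_zero"
proof -
  define c where "c = 1 / sqrt (sqnorm \<phi>)"
  have "(\<lambda>x. if x \<in> \<Omega> then \<phi> x / sqrt (sqnorm \<phi>) else 0) = (\<lambda>x. if x \<in> \<Omega> then c * \<phi> x else 0)"
    unfolding c_def by auto
  moreover have "(\<Sum>x\<in>\<Omega>. \<nu> x * (c * \<phi> x)) = c * mean \<phi>"
    by (simp add: sum_distrib_left mult_ac)
  moreover have "(\<Sum>x\<in>\<Omega>. \<nu> x * (c * \<phi> x)\<^sup>2) = c\<^sup>2 * sqnorm \<phi>"
    by (simp add: sum_distrib_left power_mult_distrib mult_ac)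
  moreover have "c\<^sup>2 * sqnorm \<phi> = 1"
    unfolding c_def using assms(2) by (simp add: power_divide)
  ultimately show ?thesis unfolding unit_mean_zero_def using assms(1) by simp
qed

lemma mean_zero_trivial:
  assumes "unit_mean_zero = {}" "mean \<phi> = 0"
  shows "sqnorm \<phi> = 0"
proof (rule ccontr)
  assume "sqnorm \<phi> \<noteq> 0"
  then have "sqnorm \<phi> > 0" by (rule order_le_neq_trans[OF sqnorm_nonneg not_sym])
  then have "(\<lambda>x. if x \<in> \<Omega> then \<phi> x / sqrt (sqnorm \<phi>) else 0) \<in> unit_mean_zero"
    by (rule normalized_in_unit_mean_zero[OF assms(2)])
  then show False unfolding assms(1) by (rule emptyE)
qed

definition rayleigh_minimizer :: "('a \<Rightarrow> real) \<Rightarrow> bool" where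
  "rayleigh_minimizer g \<longleftrightarrow> g \<in> unit_mean_zero \<and> (\<forall>\<psi>\<in>unit_mean_zero. gen_form \<psi> \<psi> \<le> gen_form g g)"

lemma rayleigh_minimizer_exists:
  assumes "unit_mean_zero \<noteq> {}"
  obtains g where "rayleigh_minimizer g"
proof -
  have "continuous_on unit_mean_zero (\<lambda>\<phi>. - gen_form \<phi> \<phi>)"
    unfolding gen_form_def
    by (rule continuous_on_subset[OF _ subset_UNIV])
       (intro continuous_intros continuous_on_product_coordinates)
  then obtain g where "g \<in> unit_mean_zero" "\<forall>\<psi>\<in>unit_mean_zero. - gen_form g g \<le> - gen_form \<psi> \<psi>"
    using continuous_attains_inf[OF compact_unit_mean_zero assms] by blast
  then have "rayleigh_minimizer g" unfolding rayleigh_minimizer_def neg_le_iff_le by blast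
  then show ?thesis by (rule that)
qed

lemma rayleigh_minimizer_poincare:
  assumes "rayleigh_minimizer g"
  shows "poincare_ineq (- gen_form g g)"
  unfolding poincare_ineq_def
proof (intro allI impI)
  fix \<phi> assume mean_zero: "mean \<phi> = 0"
  show "- gen_form g g * sqnorm \<phi> \<le> - gen_form \<phi> \<phi>"
  proof (cases "sqnorm \<phi> = 0")
    case True
    then have "gen_form \<phi> \<phi> = gen_form (\<lambda>_. 0) (\<lambda>_. 0)"
      by (intro gen_form_cong) (simp add: sqnorm_eq_0_imp[OF True])
    then show ?thesis using True by (simp add: gen_form_def)
  next
    case False
    then have pos: "sqnorm \<phi> > 0" by (rule order_le_neq_trans[OF sqnorm_nonneg not_sym])
    define c where "c = 1 / sqrt (sqnorm \<phi>)"
    have "gen_form (\<lambda>x. if x \<in> \<Omega> then \<phi> x / sqrt (sqnorm \<phi>) else 0)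
                   (\<lambda>x. if x \<in> \<Omega> then \<phi> x / sqrt (sqnorm \<phi>) else 0) \<le> gen_form g g"
      using assms normalized_in_unit_mean_zero[OF mean_zero pos] unfolding rayleigh_minimizer_def by blast
    also have "gen_form (\<lambda>x. if x \<in> \<Omega> then \<phi> x / sqrt (sqnorm \<phi>) else 0)
                        (\<lambda>x. if x \<in> \<Omega> then \<phi> x / sqrt (sqnorm \<phi>) else 0)
             = gen_form (\<lambda>x. c * \<phi> x) (\<lambda>x. c * \<phi> x)"
      by (rule gen_form_cong) (simp add: c_def)
    also have "\<dots> = gen_form \<phi> \<phi> / sqnorm \<phi>"
      unfolding gen_form_scale c_def using pos by (simp add: power_divide)
    finally show ?thesis using pos by (simp add: field_simps)
  qed
qed

text \<open>Perturbing the minimiser by \<open>e \<phi>\<close> and expanding gives a quadratic in \<open>e\<close> that is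
  nonnegative by the Poincare inequality at \<open>g + e \<phi>\<close>; its linear coefficient must vanish.\<close>

lemma rayleigh_minimizer_first_variation:
  assumes min: "rayleigh_minimizer g" and mean_zero: "mean \<phi> = 0"
  shows "gen_form g \<phi> + gen_form \<phi> g - 2 * gen_form g g * (\<Sum>x\<in>\<Omega>. \<nu> x * g x * \<phi> x) = 0"
proof -
  define m where "m = - gen_form g g"
  define c where "c = gen_form g \<phi> + gen_form \<phi> g"
  define s where "s = (\<Sum>x\<in>\<Omega>. \<nu> x * g x * \<phi> x)"
  have g0: "mean g = 0" and g1: "sqnorm g = 1"
    using min unfolding rayleigh_minimizer_def unit_mean_zero_def by auto
  have quadratic: "0 \<le> e * (- (c + 2 * m * s)) + e\<^sup>2 * (- gen_form \<phi> \<phi> - m * sqnorm \<phi>)" for e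
  proof -
    have "mean (\<lambda>x. g x + e * \<phi> x) = (\<Sum>x\<in>\<Omega>. \<nu> x * g x + e * (\<nu> x * \<phi> x))"
      by (intro sum.cong refl) (simp add: algebra_simps)
    also have "\<dots> = mean g + e * mean \<phi>"
      by (simp only: sum.distrib sum_distrib_left)
    finally have perturbed_mean: "mean (\<lambda>x. g x + e * \<phi> x) = 0"
      using g0 mean_zero by simp
    have "sqnorm (\<lambda>x. g x + e * \<phi> x)
        = (\<Sum>x\<in>\<Omega>. \<nu> x * (g x)\<^sup>2 + 2 * e * (\<nu> x * g x * \<phi> x) + e\<^sup>2 * (\<nu> x * (\<phi> x)\<^sup>2))"
      by (intro sum.cong refl) (simp add: power2_eq_square algebra_simps)
    also have "\<dots> = sqnorm g + 2 * e * s + e\<^sup>2 * sqnorm \<phi>"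
      unfolding s_def by (simp only: sum.distrib sum_distrib_left)
    finally have "sqnorm (\<lambda>x. g x + e * \<phi> x) = 1 + 2 * e * s + e\<^sup>2 * sqnorm \<phi>"
      by (simp only: g1)
    then have "m * (1 + 2 * e * s + e\<^sup>2 * sqnorm \<phi>) \<le> - (- m + e * c + e\<^sup>2 * gen_form \<phi> \<phi>)"
      using rayleigh_minimizer_poincare[OF min, unfolded poincare_ineq_def, rule_format, OF perturbed_mean]
      unfolding gen_form_add_scaled m_def c_def by simp
    then show ?thesis by (simp add: algebra_simps)
  qed
  have "- (c + 2 * m * s) = 0"
    by (rule quadratic_nonneg_imp_linear_coeff_zero[OF allI[OF quadratic]])
  then have "c - 2 * gen_form g g * s = 0" unfolding m_def by simp
  then show ?thesis unfolding c_def s_def .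
qed

lemma rayleigh_minimizer_eigenfunction:
  assumes min: "rayleigh_minimizer g" and x: "x \<in> \<Omega>"
  shows "- (\<Sum>y\<in>\<Omega>. sym_gen \<Omega> R \<nu> x y * g y) = - gen_form g g * g x"
proof -
  define v where "v x = - (\<Sum>y\<in>\<Omega>. sym_gen \<Omega> R \<nu> x y * g y) + gen_form g g * g x" for x
  have g0: "mean g = 0"
    using min unfolding rayleigh_minimizer_def unit_mean_zero_def by auto
  have orth: "(\<Sum>x\<in>\<Omega>. \<nu> x * \<phi> x * v x)
      = - ((gen_form \<phi> g + gen_form g \<phi>) / 2) + gen_form g g * (\<Sum>x\<in>\<Omega>. \<nu> x * g x * \<phi> x)" for \<phi>
  proof -
    have "(\<Sum>x\<in>\<Omega>. \<nu> x * \<phi> x * v x)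
        = (\<Sum>x\<in>\<Omega>. - (\<nu> x * \<phi> x * (\<Sum>y\<in>\<Omega>. sym_gen \<Omega> R \<nu> x y * g y))
                   + gen_form g g * (\<nu> x * g x * \<phi> x))"
      by (intro sum.cong refl) (simp add: v_def algebra_simps)
    also have "\<dots> = - (\<Sum>x\<in>\<Omega>. \<nu> x * \<phi> x * (\<Sum>y\<in>\<Omega>. sym_gen \<Omega> R \<nu> x y * g y))
                   + gen_form g g * (\<Sum>x\<in>\<Omega>. \<nu> x * g x * \<phi> x)"
      by (simp only: sum.distrib sum_negf sum_distrib_left[symmetric])
    finally show ?thesis unfolding gen_form_sym_gen .
  qed
  have "mean v = 0"
    using orth[of "\<lambda>_. 1"] g0 by (simp add: gen_form_const_left gen_form_const_right)
  then have "gen_form g v + gen_form v g = 2 * (gen_form g g * (\<Sum>x\<in>\<Omega>. \<nu> x * g x * v x))"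
    using rayleigh_minimizer_first_variation[OF min] by (simp add: mult.assoc)
  then have "(\<Sum>x\<in>\<Omega>. \<nu> x * v x * v x) = 0"
    using orth[of v] by (simp add: field_simps)
  then have "sqnorm v = 0" by (simp add: power2_eq_square mult.assoc)
  then have "v x = 0" by (rule sqnorm_eq_0_imp[OF _ x])
  then show ?thesis unfolding v_def by simp
qed

lemma rayleigh_minimizer_pos:
  assumes min: "rayleigh_minimizer g"
  shows "- gen_form g g > 0"
proof (rule ccontr)
  assume "\<not> - gen_form g g > 0"
  then have "gen_form g g = 0" using gen_form_diag_nonpos[of g] by simp
  obtain x0 where x0: "x0 \<in> \<Omega>" using states_nonempty by auto
  have const: "g y = g x0" if "y \<in> \<Omega>" for y
    using dirichlet_form_zero_imp_const[OF \<open>gen_form g g = 0\<close> that x0] .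
  have g0: "mean g = 0" and g1: "sqnorm g = 1"
    using min unfolding rayleigh_minimizer_def unit_mean_zero_def by auto
  have "g x0 = 0" using g0 stationary_sum by (simp add: const sum_distrib_right[symmetric])
  then show False using g1 const by simp
qed

text \<open>Eigenfunctions of a positive eigenvalue are orthogonal to the constants, so the
  Poincare constant bounds every positive eigenvalue from below.\<close>

lemma poincare_le_eigenvalue:
  assumes "poincare_ineq \<gamma>" "l > 0" "\<exists>x\<in>\<Omega>. f x \<noteq> 0"
    and eigen: "\<forall>x\<in>\<Omega>. - (\<Sum>y\<in>\<Omega>. sym_gen \<Omega> R \<nu> x y * f y) = l * f x"
  shows "\<gamma> \<le> l"
proof -
  have rayleigh: "l * (\<Sum>x\<in>\<Omega>. \<nu> x * \<psi> x * f x) = - ((gen_form \<psi> f + gen_form f \<psi>) / 2)" for \<psi>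
  proof -
    have "l * (\<Sum>x\<in>\<Omega>. \<nu> x * \<psi> x * f x) = (\<Sum>x\<in>\<Omega>. \<nu> x * \<psi> x * (l * f x))"
      by (simp add: sum_distrib_left mult_ac)
    also have "\<dots> = (\<Sum>x\<in>\<Omega>. - (\<nu> x * \<psi> x * (\<Sum>y\<in>\<Omega>. sym_gen \<Omega> R \<nu> x y * f y)))"
      by (intro sum.cong refl) (simp add: eigen[rule_format, symmetric])
    finally show ?thesis by (simp only: sum_negf gen_form_sym_gen)
  qed
  have "l * mean f = 0"
    using rayleigh[of "\<lambda>_. 1"] by (simp add: gen_form_const_left gen_form_const_right)
  then have "mean f = 0" using assms(2) by simp
  moreover have "l * sqnorm f = - gen_form f f"
    using rayleigh[of f] by (simp add: power2_eq_square mult_ac)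
  ultimately have "\<gamma> * sqnorm f \<le> l * sqnorm f"
    using assms(1) unfolding poincare_ineq_def by simp
  moreover have "sqnorm f \<noteq> 0"
    using sqnorm_eq_0_imp[of f] assms(3) by blast
  then have "sqnorm f > 0"
    by (rule order_le_neq_trans[OF sqnorm_nonneg not_sym])
  ultimately show ?thesis
    by (rule mult_right_le_imp_le)
qed

lemma spectral_gap_poincare:
  assumes "unit_mean_zero \<noteq> {}"
  shows "spectral_gap \<Omega> R \<nu> > 0" and "poincare_ineq (spectral_gap \<Omega> R \<nu>)"
proof -
  obtain g where min: "rayleigh_minimizer g" using rayleigh_minimizer_exists[OF assms] .
  have "sqnorm g = 1" using min unfolding rayleigh_minimizer_def unit_mean_zero_def by auto
  then have nonzero: "\<exists>x\<in>\<Omega>. g x \<noteq> 0" by (rule contrapos_pp) simp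
  define eigenvalues where "eigenvalues = {l. l > 0 \<and> (\<exists>f. (\<exists>x\<in>\<Omega>. f x \<noteq> 0) \<and>
        (\<forall>x\<in>\<Omega>. - (\<Sum>y\<in>\<Omega>. sym_gen \<Omega> R \<nu> x y * f y) = l * f x))}"
  have "- gen_form g g \<in> eigenvalues"
    unfolding eigenvalues_def
    using rayleigh_minimizer_pos[OF min] rayleigh_minimizer_eigenfunction[OF min] nonzero by blast
  moreover have "- gen_form g g \<le> l" if "l \<in> eigenvalues" for l
    using that poincare_le_eigenvalue[OF rayleigh_minimizer_poincare[OF min]]
    unfolding eigenvalues_def by blast
  ultimately have "spectral_gap \<Omega> R \<nu> = - gen_form g g"
    unfolding spectral_gap_def eigenvalues_def[symmetric] by (rule cInf_eq_minimum)
  then show "spectral_gap \<Omega> R \<nu> > 0" and "poincare_ineq (spectral_gap \<Omega> R \<nu>)"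
    using rayleigh_minimizer_pos[OF min] rayleigh_minimizer_poincare[OF min] by simp_all
qed

end

section \<open>Hitting before a given time\<close>

context markov_hitting
begin

lemma density_cauchy_schwarz:
  "(\<Sum>x\<in>\<Omega>. \<mu> x * \<phi> x) \<le> L2norm \<Omega> \<nu> (\<lambda>x. \<mu> x / \<nu> x) * sqrt (sqnorm \<phi>)"
proof -
  define F where "F x = sqrt (\<nu> x) * (\<mu> x / \<nu> x)" for x
  define G where "G x = sqrt (\<nu> x) * \<phi> x" for x
  have weighted_square: "(sqrt (\<nu> x) * a)\<^sup>2 = \<nu> x * a\<^sup>2" if "x \<in> \<Omega>" for x a
    using stationary_nonneg[OF that] by (simp add: power_mult_distrib)
  have "(\<Sum>x\<in>\<Omega>. \<mu> x * \<phi> x) \<le> (\<Sum>x\<in>\<Omega>. \<bar>F x\<bar> * \<bar>G x\<bar>)"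
  proof (rule sum_mono)
    fix x assume x: "x \<in> \<Omega>"
    have "\<bar>F x\<bar> * \<bar>G x\<bar> = \<bar>sqrt (\<nu> x) * sqrt (\<nu> x) * (\<mu> x / \<nu> x) * \<phi> x\<bar>"
      unfolding F_def G_def by (simp add: abs_mult mult_ac)
    also have "\<dots> = \<bar>\<mu> x * \<phi> x\<bar>" using stationary_pos[OF x] by simp
    finally show "\<mu> x * \<phi> x \<le> \<bar>F x\<bar> * \<bar>G x\<bar>" by simp
  qed
  also have "\<dots> \<le> L2_set F \<Omega> * L2_set G \<Omega>" by (rule L2_set_mult_ineq)
  also have "L2_set F \<Omega> = L2norm \<Omega> \<nu> (\<lambda>x. \<mu> x / \<nu> x)"
    unfolding L2_set_def L2norm_def F_def
    by (intro arg_cong[where f = sqrt] sum.cong refl) (rule weighted_square)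
  also have "L2_set G \<Omega> = sqrt (sqnorm \<phi>)"
    unfolding L2_set_def G_def
    by (intro arg_cong[where f = sqrt] sum.cong refl) (rule weighted_square)
  finally show ?thesis .
qed

definition escape_rate :: "'a \<Rightarrow> real" where
  "escape_rate x = (if x \<notin> A then 1 else 0) * rate_to R x A"

lemma escape_rate_nonneg: "x \<in> \<Omega> \<Longrightarrow> escape_rate x \<ge> 0"
  unfolding escape_rate_def rate_to_def using target_subset rate_nonneg by (auto intro!: sum_nonneg)

lemma escape_rate_outside: "x \<in> B \<Longrightarrow> escape_rate x = rate_to R x A"
  unfolding escape_rate_def by simp

lemma mean_escape_rate: "mean escape_rate = meas \<nu> B * cap_rate \<Omega> R \<nu> A"
proof -
  have "mean escape_rate = (\<Sum>x\<in>B. \<nu> x * escape_rate x) + (\<Sum>x\<in>A. \<nu> x * escape_rate x)"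
    using sum.subset_diff[OF target_subset finite_states] by simp
  also have "\<dots> = (\<Sum>x\<in>B. \<nu> x * rate_to R x A)"
    by (simp add: escape_rate_def)
  finally have flux: "mean escape_rate = (\<Sum>x\<in>B. \<nu> x * rate_to R x A)" .
  show ?thesis
  proof (cases "B = {}")
    case True
    then show ?thesis unfolding cap_rate_def meas_def flux True by simp
  next
    case False
    then obtain x where x: "x \<in> B" by auto
    have "\<nu> x \<le> meas \<nu> B"
      unfolding meas_def using member_le_sum[of x B \<nu>] x finite_outside stationary_nonneg by auto
    then have "meas \<nu> B \<noteq> 0" using stationary_pos[of x] x by auto
    then show ?thesis using flux unfolding cap_rate_def by simp
  qed
qed

lemma sqnorm_centered_le: "sqnorm (\<lambda>x. \<phi> x - mean \<phi>) \<le> sqnorm \<phi>"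
proof -
  have "sqnorm (\<lambda>x. \<phi> x - mean \<phi>)
      = (\<Sum>x\<in>\<Omega>. \<nu> x * (\<phi> x)\<^sup>2 - 2 * mean \<phi> * (\<nu> x * \<phi> x) + (mean \<phi>)\<^sup>2 * \<nu> x)"
    by (intro sum.cong refl) (simp add: power2_eq_square algebra_simps)
  also have "\<dots> = sqnorm \<phi> - 2 * mean \<phi> * mean \<phi> + (mean \<phi>)\<^sup>2 * (\<Sum>x\<in>\<Omega>. \<nu> x)"
    by (simp only: sum.distrib sum_subtractf sum_distrib_left)
  also have "\<dots> = sqnorm \<phi> - (mean \<phi>)\<^sup>2"
    by (simp add: stationary_sum power2_eq_square)
  finally show ?thesis by simp
qed

definition hit_prob :: "real \<Rightarrow> real" where
  "hit_prob t = 1 - (\<Sum>x\<in>B. \<mu> x * (\<Sum>y\<in>B. mexp B t L x y))"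

definition hit_rate :: "real \<Rightarrow> real" where
  "hit_rate t = (\<Sum>x\<in>B. \<mu> x * (\<Sum>z\<in>B. mexp B t L x z * escape_rate z))"

lemma hit_before_eq_hit_prob: "t > 0 \<Longrightarrow> hit_before \<Omega> R \<mu> A t = hit_prob t"
  unfolding hit_before_def hit_prob_def by simp

lemma hit_prob_0: "hit_prob 0 = meas \<mu> A"
proof -
  have "(\<Sum>y\<in>B. mexp B 0 L x y) = 1" if "x \<in> B" for x
    using that finite_outside by (simp add: mexp_0 if_distrib cong: if_cong)
  then have "(\<Sum>x\<in>B. \<mu> x * (\<Sum>y\<in>B. mexp B 0 L x y)) = (\<Sum>x\<in>B. \<mu> x)" by simp
  moreover have "(\<Sum>x\<in>\<Omega>. \<mu> x) = (\<Sum>x\<in>B. \<mu> x) + (\<Sum>x\<in>A. \<mu> x)"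
    using sum.subset_diff[OF target_subset finite_states] by simp
  ultimately show ?thesis unfolding hit_prob_def meas_def using initial_sum by simp
qed

lemma has_real_derivative_hit_prob: "(hit_prob has_real_derivative hit_rate t) (at t)"
proof -
  have "(\<Sum>y\<in>B. \<Sum>z\<in>B. mexp B t L x z * L z y) = - (\<Sum>z\<in>B. mexp B t L x z * escape_rate z)" for x
  proof -
    have "(\<Sum>y\<in>B. \<Sum>z\<in>B. mexp B t L x z * L z y) = (\<Sum>z\<in>B. mexp B t L x z * (\<Sum>y\<in>B. L z y))"
      by (subst sum.swap) (simp add: sum_distrib_left)
    then show ?thesis by (simp add: gen_row_sum_outside escape_rate_outside sum_negf)
  qed
  moreover have "((\<lambda>t. \<Sum>x\<in>B. \<mu> x * (\<Sum>y\<in>B. mexp B t L x y)) has_real_derivative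
       (\<Sum>x\<in>B. \<mu> x * (\<Sum>y\<in>B. \<Sum>z\<in>B. mexp B t L x z * L z y))) (at t)"
    by (intro DERIV_sum DERIV_cmult has_real_derivative_mexp_right finite_outside) auto
  ultimately have "((\<lambda>t. \<Sum>x\<in>B. \<mu> x * (\<Sum>y\<in>B. mexp B t L x y)) has_real_derivative - hit_rate t) (at t)"
    by (simp add: hit_rate_def sum_negf)
  then show ?thesis
    unfolding hit_prob_def using DERIV_diff[OF DERIV_const] by fastforce
qed

lemma hit_rate_nonneg: "t \<ge> 0 \<Longrightarrow> hit_rate t \<ge> 0"
  unfolding hit_rate_def
  by (intro sum_nonneg mult_nonneg_nonneg initial_nonneg killed_transition_nonneg escape_rate_nonneg) auto

lemma mean_centered: "mean (\<lambda>x. \<phi> x - mean \<phi>) = 0"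
  using stationary_sum by (simp add: algebra_simps sum_subtractf flip: sum_distrib_right)

lemma semigroup_centered:
  "x \<in> \<Omega> \<Longrightarrow> semigroup t \<phi> x = mean \<phi> + semigroup t (\<lambda>y. \<phi> y - mean \<phi>) x"
  using transition_row_sum[of x t]
  by (simp add: semigroup_def algebra_simps sum_subtractf flip: sum_distrib_left sum_distrib_right)

lemma L2norm_semigroup_le:
  assumes "poincare_ineq \<gamma>" "mean g = 0" "t \<ge> 0"
  shows "sqrt (sqnorm (semigroup t g)) \<le> exp (- (\<gamma> * t)) * L2norm \<Omega> \<nu> g"
proof -
  have "sqrt (sqnorm (semigroup t g)) \<le> sqrt (exp (- (2 * \<gamma> * t)) * sqnorm g)"
    by (intro real_sqrt_le_mono sqnorm_semigroup_decay assms)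
  also have "exp (- (2 * \<gamma> * t)) = (exp (- (\<gamma> * t)))\<^sup>2"
    by (simp add: power2_eq_square flip: exp_add)
  finally show ?thesis unfolding L2norm_def by (simp add: real_sqrt_mult)
qed

lemma hit_rate_le_unkilled:
  assumes t: "t \<ge> 0"
  shows "hit_rate t \<le> (\<Sum>x\<in>\<Omega>. \<mu> x * semigroup t escape_rate x)"
proof -
  have rate_nonneg: "0 \<le> mexp \<Omega> t L x z * escape_rate z" if "x \<in> \<Omega>" "z \<in> \<Omega>" for x z
    using that t by (intro mult_nonneg_nonneg transition_nonneg escape_rate_nonneg)
  have "(\<Sum>z\<in>B. mexp B t L x z * escape_rate z) \<le> semigroup t escape_rate x" if x: "x \<in> B" for x
  proof -
    have "(\<Sum>z\<in>B. mexp B t L x z * escape_rate z) \<le> (\<Sum>z\<in>B. mexp \<Omega> t L x z * escape_rate z)"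
      by (intro sum_mono mult_right_mono killed_transition_le escape_rate_nonneg) (use x t in auto)
    also have "\<dots> \<le> semigroup t escape_rate x"
      unfolding semigroup_def by (rule sum_mono2[OF finite_states]) (use x rate_nonneg in auto)
    finally show ?thesis .
  qed
  then have "hit_rate t \<le> (\<Sum>x\<in>B. \<mu> x * semigroup t escape_rate x)"
    unfolding hit_rate_def by (intro sum_mono mult_left_mono) (auto intro: initial_nonneg)
  also have "\<dots> \<le> (\<Sum>x\<in>\<Omega>. \<mu> x * semigroup t escape_rate x)"
    unfolding semigroup_def
    by (rule sum_mono2[OF finite_states]) (auto intro!: mult_nonneg_nonneg initial_nonneg sum_nonneg rate_nonneg)
  finally show ?thesis .
qed

lemma hit_rate_le:
  assumes poincare: "poincare_ineq \<gamma>" and t: "t \<ge> 0"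
  shows "hit_rate t \<le> mean escape_rate
    + L2norm \<Omega> \<nu> (\<lambda>x. \<mu> x / \<nu> x) * L2norm \<Omega> \<nu> (\<lambda>x. escape_rate x - mean escape_rate) * exp (- (\<gamma> * t))"
proof -
  define c where "c = mean escape_rate"
  define g where "g x = escape_rate x - c" for x
  have "hit_rate t \<le> (\<Sum>x\<in>\<Omega>. \<mu> x * semigroup t escape_rate x)"
    by (rule hit_rate_le_unkilled[OF t])
  also have "\<dots> = (\<Sum>x\<in>\<Omega>. \<mu> x * c + \<mu> x * semigroup t g x)"
    unfolding c_def g_def by (intro sum.cong refl) (simp add: semigroup_centered[of _ t escape_rate] distrib_left)
  also have "\<dots> = c + (\<Sum>x\<in>\<Omega>. \<mu> x * semigroup t g x)"
    using initial_sum by (simp add: sum.distrib flip: sum_distrib_right)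
  also have "\<dots> \<le> c + L2norm \<Omega> \<nu> (\<lambda>x. \<mu> x / \<nu> x) * sqrt (sqnorm (semigroup t g))"
    by (intro add_left_mono density_cauchy_schwarz)
  also have "\<dots> \<le> c + L2norm \<Omega> \<nu> (\<lambda>x. \<mu> x / \<nu> x) * (exp (- (\<gamma> * t)) * L2norm \<Omega> \<nu> g)"
    unfolding g_def c_def
    by (intro add_left_mono mult_left_mono L2norm_semigroup_le[OF poincare mean_centered t] L2norm_nonneg)
  finally show ?thesis unfolding c_def g_def by (simp add: mult_ac)
qed

end

context markov_hitting
begin

lemma hit_prob_le:
  assumes "\<gamma> > 0" and poincare: "poincare_ineq \<gamma>" and "S \<ge> 0"
  shows "hit_prob S \<le> meas \<mu> A + S * mean escape_rate
    + L2norm \<Omega> \<nu> (\<lambda>x. \<mu> x / \<nu> x) * L2norm \<Omega> \<nu> (\<lambda>x. escape_rate x - mean escape_rate)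
      * ((1 - exp (- (\<gamma> * S))) / \<gamma>)"
proof -
  define K where "K = L2norm \<Omega> \<nu> (\<lambda>x. \<mu> x / \<nu> x) * L2norm \<Omega> \<nu> (\<lambda>x. escape_rate x - mean escape_rate)"
  define G where "G t = hit_prob t - t * mean escape_rate - K * ((1 - exp (- (\<gamma> * t))) / \<gamma>)" for t
  have "(G has_real_derivative hit_rate t - mean escape_rate - K * exp (- (\<gamma> * t))) (at t)" for t
  proof -
    have "(G has_real_derivative hit_rate t - 1 * mean escape_rate
        - K * ((0 - exp (- (\<gamma> * t)) * (- \<gamma>)) / \<gamma>)) (at t)"
      unfolding G_def
      by (intro DERIV_diff has_real_derivative_hit_prob DERIV_cmult_right DERIV_cmult
          DERIV_cdivide DERIV_const DERIV_ident) (auto intro!: derivative_eq_intros)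
    then show ?thesis using assms(1) by simp
  qed
  moreover have "hit_rate t - mean escape_rate - K * exp (- (\<gamma> * t)) \<le> 0" if "t \<ge> 0" for t
    using hit_rate_le[OF poincare that] unfolding K_def by simp
  ultimately have "G S \<le> G 0"
    using DERIV_nonpos_imp_nonincreasing[OF assms(3), of G] by blast
  then show ?thesis unfolding G_def K_def hit_prob_0 by simp
qed

lemma meas_initial_target_nonneg: "meas \<mu> A \<ge> 0"
  unfolding meas_def using target_subset initial_nonneg by (auto intro!: sum_nonneg)

lemma hit_prob_ge: "S \<ge> 0 \<Longrightarrow> meas \<mu> A \<le> hit_prob S"
  using DERIV_nonneg_imp_nondecreasing[of 0 S hit_prob] has_real_derivative_hit_prob hit_rate_nonneg
  unfolding hit_prob_0[symmetric] by blast

lemma hit_prob_le_trivial_spectrum: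
  assumes "unit_mean_zero = {}" "S \<ge> 0"
  shows "hit_prob S \<le> meas \<mu> A + S * mean escape_rate"
proof -
  have "poincare_ineq 1"
    unfolding poincare_ineq_def using mean_zero_trivial[OF assms(1)] gen_form_diag_nonpos by simp
  moreover have "L2norm \<Omega> \<nu> (\<lambda>x. escape_rate x - mean escape_rate) = 0"
    unfolding L2norm_def using mean_zero_trivial[OF assms(1) mean_centered] by simp
  ultimately show ?thesis using hit_prob_le[of 1 S] assms(2) by simp
qed

lemma hit_prob_le_spectral_gap:
  assumes "unit_mean_zero \<noteq> {}" "S \<ge> 0"
  shows "hit_prob S \<le> meas \<mu> A + S * mean escape_rate
    + L2norm \<Omega> \<nu> escape_rate * L2norm \<Omega> \<nu> (\<lambda>x. \<mu> x / \<nu> x)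
      * T_rel \<Omega> R \<nu> * (1 - exp (- S / T_rel \<Omega> R \<nu>))"
proof -
  define \<gamma> where "\<gamma> = spectral_gap \<Omega> R \<nu>"
  have \<gamma>: "\<gamma> > 0" "poincare_ineq \<gamma>"
    using spectral_gap_poincare[OF assms(1)] unfolding \<gamma>_def by auto
  have centered: "L2norm \<Omega> \<nu> (\<lambda>x. escape_rate x - mean escape_rate) \<le> L2norm \<Omega> \<nu> escape_rate"
    by (simp add: L2norm_def sqnorm_centered_le)
  have "hit_prob S \<le> meas \<mu> A + S * mean escape_rate
    + L2norm \<Omega> \<nu> (\<lambda>x. \<mu> x / \<nu> x) * L2norm \<Omega> \<nu> (\<lambda>x. escape_rate x - mean escape_rate)
      * ((1 - exp (- (\<gamma> * S))) / \<gamma>)"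
    by (rule hit_prob_le[OF \<gamma> assms(2)])
  also have "\<dots> \<le> meas \<mu> A + S * mean escape_rate
    + L2norm \<Omega> \<nu> (\<lambda>x. \<mu> x / \<nu> x) * L2norm \<Omega> \<nu> escape_rate * ((1 - exp (- (\<gamma> * S))) / \<gamma>)"
    using \<gamma>(1) assms(2)
    by (intro add_left_mono mult_right_mono mult_left_mono centered L2norm_nonneg) simp
  also have "\<dots> = meas \<mu> A + S * mean escape_rate
    + L2norm \<Omega> \<nu> escape_rate * L2norm \<Omega> \<nu> (\<lambda>x. \<mu> x / \<nu> x)
      * T_rel \<Omega> R \<nu> * (1 - exp (- S / T_rel \<Omega> R \<nu>))"
    unfolding T_rel_def \<gamma>_def[symmetric] by (simp add: mult_ac)
  finally show ?thesis .
qed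

text \<open>If every mean-zero function vanishes, \<open>spectral_gap\<close> is the infimum of an empty set,
  about which nothing is known; but then the fluctuation term vanishes and the bound holds
  for any sign of the second summand, which is why it appears in absolute value.\<close>

lemma hit_before_bound:
  assumes "S > 0"
  shows "0 \<le> hit_before \<Omega> R \<mu> A S"
    and "hit_before \<Omega> R \<mu> A S \<le> meas \<mu> A + S * meas \<nu> B * cap_rate \<Omega> R \<nu> A
      + \<bar>L2norm \<Omega> \<nu> escape_rate * L2norm \<Omega> \<nu> (\<lambda>x. \<mu> x / \<nu> x)
          * T_rel \<Omega> R \<nu> * (1 - exp (- S / T_rel \<Omega> R \<nu>))\<bar>"
proof -
  show "0 \<le> hit_before \<Omega> R \<mu> A S"
    using hit_prob_ge[of S] meas_initial_target_nonneg assms by (simp add: hit_before_eq_hit_prob)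
  define b where "b = L2norm \<Omega> \<nu> escape_rate * L2norm \<Omega> \<nu> (\<lambda>x. \<mu> x / \<nu> x)
          * T_rel \<Omega> R \<nu> * (1 - exp (- S / T_rel \<Omega> R \<nu>))"
  have "hit_prob S \<le> meas \<mu> A + S * mean escape_rate + \<bar>b\<bar>"
  proof (cases "unit_mean_zero = {}")
    case True
    show ?thesis
      by (rule add_increasing2[OF abs_ge_zero hit_prob_le_trivial_spectrum[OF True less_imp_le[OF assms]]])
  next
    case False
    have "hit_prob S \<le> meas \<mu> A + S * mean escape_rate + b"
      unfolding b_def by (rule hit_prob_le_spectral_gap[OF False less_imp_le[OF assms]])
    then show ?thesis by (rule order_trans[OF _ add_left_mono[OF abs_ge_self]])
  qed
  then show "hit_before \<Omega> R \<mu> A S \<le> meas \<mu> A + S * meas \<nu> B * cap_rate \<Omega> R \<nu> A + \<bar>b\<bar>"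
    using assms by (simp add: hit_before_eq_hit_prob mean_escape_rate mult.assoc)
qed

end

theorem lemma3p9:
  fixes \<Omega> :: "nat \<Rightarrow> 'a set"
    and R :: "nat \<Rightarrow> 'a \<Rightarrow> 'a \<Rightarrow> real"
    and \<nu> \<mu> :: "nat \<Rightarrow> 'a \<Rightarrow> real"
    and A :: "nat \<Rightarrow> 'a set"
    and S :: "nat \<Rightarrow> real"
  assumes fin: "\<forall>N\<ge>1. finite (\<Omega> N) \<and> \<Omega> N \<noteq> {}"
    and rates: "\<forall>N\<ge>1. \<forall>x\<in>\<Omega> N. \<forall>y\<in>\<Omega> N. R N x y \<ge> 0 \<and> R N x x = 0"
    and irr: "\<forall>N\<ge>1. irreducible (\<Omega> N) (R N)"
    and stat: "\<forall>N\<ge>1. stationary (\<Omega> N) (R N) (\<nu> N)"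
    and AN: "\<forall>N\<ge>1. A N \<subseteq> \<Omega> N"
    and nuA: "(\<lambda>N. meas (\<nu> N) (A N)) \<longlonglongrightarrow> 0"
    and Sinc: "\<forall>N\<ge>1. S N \<le> S (Suc N)"
    and mu: "\<forall>N\<ge>1. is_prob (\<Omega> N) (\<mu> N)"
    and h1: "(\<lambda>N. meas (\<mu> N) (A N)
               + S N * meas (\<nu> N) (\<Omega> N - A N) * cap_rate (\<Omega> N) (R N) (\<nu> N) (A N)) \<longlonglongrightarrow> 0"
    and h2: "(\<lambda>N. L2norm (\<Omega> N) (\<nu> N)
                  (\<lambda>x. (if x \<notin> A N then 1 else 0) * rate_to (R N) x (A N))
               * L2norm (\<Omega> N) (\<nu> N) (\<lambda>x. \<mu> N x / \<nu> N x)
               * T_rel (\<Omega> N) (R N) (\<nu> N)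
               * (1 - exp (- S N / T_rel (\<Omega> N) (R N) (\<nu> N)))) \<longlonglongrightarrow> 0"
  shows "(\<lambda>N. hit_before (\<Omega> N) (R N) (\<mu> N) (A N) (S N)) \<longlonglongrightarrow> 0"
proof (rule Lim_null_comparison)
  define a where "a N = meas (\<mu> N) (A N)
    + S N * meas (\<nu> N) (\<Omega> N - A N) * cap_rate (\<Omega> N) (R N) (\<nu> N) (A N)" for N
  define b where "b N = L2norm (\<Omega> N) (\<nu> N) (\<lambda>x. (if x \<notin> A N then 1 else 0) * rate_to (R N) x (A N))
    * L2norm (\<Omega> N) (\<nu> N) (\<lambda>x. \<mu> N x / \<nu> N x) * T_rel (\<Omega> N) (R N) (\<nu> N)
    * (1 - exp (- S N / T_rel (\<Omega> N) (R N) (\<nu> N)))" for N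
  show "(\<lambda>N. \<bar>a N\<bar> + \<bar>b N\<bar>) \<longlonglongrightarrow> 0"
    using tendsto_add_zero[OF tendsto_rabs_zero[OF h1] tendsto_rabs_zero[OF h2]]
    unfolding a_def b_def .
  have "norm (hit_before (\<Omega> N) (R N) (\<mu> N) (A N) (S N)) \<le> \<bar>a N\<bar> + \<bar>b N\<bar>" if "N \<ge> 1" for N
  proof (cases "S N > 0")
    case True
    interpret markov_hitting "\<Omega> N" "R N" "\<nu> N" "\<mu> N" "A N"
      using fin rates irr stat AN mu that by unfold_locales auto
    show ?thesis
      using hit_before_bound[OF True] unfolding a_def b_def escape_rate_def[abs_def] by simp
  qed (simp add: hit_before_def)
  then show "\<forall>\<^sub>F N in sequentially. norm (hit_before (\<Omega> N) (R N) (\<mu> N) (A N) (S N)) \<le> \<bar>a N\<bar> + \<bar>b N\<bar>"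
    by (rule eventually_sequentiallyI)
qed

end
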